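(* Let $d\ge 2$. Let $P$ be the Power Spherical distribution on $\mathbb{S}^{d-1}$ with direction $\mu_p\in\mathbb{S}^{d-1}$ and concentration $\kappa_p\ge 0$, and let $Q$ be the von Mises-Fisher distribution on $\mathbb{S}^{d-1}$ with direction $\mu_q\in\mathbb{S}^{d-1}$ and concentration $\kappa_q\ge 0$. With $\alpha=\frac{d-1}{2}+\kappa_p$ and $\beta=\frac{d-1}{2}$, $$\mathrm{D_{KL}}[P\|Q] = -\operatorname{H}(P) + \log C_X(\kappa_q,d) - \kappa_q\,\mu_q^\top\mu_p\left(\frac{\alpha-\beta}{\alpha+\beta}\right),$$ where $\operatorname{H}(P)$ is the differential entropy of $P$.
   Context: $\mathbb{S}^{d-1}=\{x\in\mathbb{R}^d:\|x\|_2=1\}$ with surface measure $\sigma$. The Power Spherical distribution with direction $\mu$ and concentration $\kappa$ has density w.r.t. $\sigma$ proportional to $(1+\mu^\top x)^\kappa$. The von Mises-Fisher distribution with direction $\mu_q$ and concentration $\kappa_q$ has density $q(x) = C_X(\kappa_q,d)^{-1}\exp(\kappa_q\mu_q^\top x)$ w.r.t. $\sigma$, where $C_X(\kappa_q,d)=\int_{\mathbb{S}^{d-1}}\exp(\kappa_q\mu_q^\top x)\,d\sigma(x)$ is its normalizer. $\operatorname{H}(P) = -\mathbb{E}_{p}[\log p]$ and $\mathrm{D_{KL}}[P\|Q] = -\operatorname{H}(P) - \mathbb{E}_{p}[\log q]$. *)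

theory Defs
  imports "HOL-Analysis.Analysis"
begin

text \<open>This is the standard (Hausdorff) surface measure.\<close>
definition sphere_surface :: "'a::euclidean_space measure" where
  "sphere_surface = measure_of (sphere 0 1) (sets (restrict_space borel (sphere 0 1)))
     (\<lambda>A. of_nat DIM('a) * emeasure lborel ((\<lambda>(t::real, x). t *\<^sub>R x) ` ({0<..1} \<times> A)))"

text \<open>Unnormalised Power Spherical density (1 + mu^T x)^kappa, with the convention 0^0 = 1.\<close>
definition ps_unnorm :: "real \<Rightarrow> 'a::euclidean_space \<Rightarrow> 'a \<Rightarrow> real" where
  "ps_unnorm \<kappa> \<mu> x = (if \<kappa> = 0 then 1 else (1 + \<mu> \<bullet> x) powr \<kappa>)"

definition ps_density :: "real \<Rightarrow> 'a::euclidean_space \<Rightarrow> 'a \<Rightarrow> real" where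
  "ps_density \<kappa> \<mu> x = ps_unnorm \<kappa> \<mu> x / (\<integral>y. ps_unnorm \<kappa> \<mu> y \<partial>sphere_surface)"

definition vmf_norm :: "real \<Rightarrow> 'a::euclidean_space \<Rightarrow> real" where
  "vmf_norm \<kappa> \<mu> = (\<integral>x. exp (\<kappa> * (\<mu> \<bullet> x)) \<partial>(sphere_surface :: 'a measure))"

definition vmf_density :: "real \<Rightarrow> 'a::euclidean_space \<Rightarrow> 'a \<Rightarrow> real" where
  "vmf_density \<kappa> \<mu> x = exp (\<kappa> * (\<mu> \<bullet> x)) / vmf_norm \<kappa> \<mu>"

definition sph_entropy :: "('a::euclidean_space \<Rightarrow> real) \<Rightarrow> real" where
  "sph_entropy p = - (\<integral>x. p x * ln (p x) \<partial>sphere_surface)"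

definition sph_KL :: "('a::euclidean_space \<Rightarrow> real) \<Rightarrow> ('a \<Rightarrow> real) \<Rightarrow> real" where
  "sph_KL p q = - sph_entropy p - (\<integral>x. p x * ln (q x) \<partial>sphere_surface)"

end

theory Submission
  imports Defs
begin

text \<open>
  Since \<open>ln q(x) = \<kappa>q \<mu>q\<^sup>T x - ln C\<^sub>X\<close>, the cross-entropy term of the divergence is
  \<open>ln C\<^sub>X - \<kappa>q \<mu>q\<^sup>T E\<^sub>p[x]\<close>, and the theorem amounts to the mean of the Power Spherical
  distribution: \<open>E\<^sub>p[x] = \<kappa>p / (\<kappa>p + d - 1) \<mu>p = (\<alpha> - \<beta>) / (\<alpha> + \<beta>) \<mu>p\<close>.

  The moments of \<open>(1 + m\<^sup>T x)\<^sup>k\<close> are obtained by integrating by parts in \<open>\<real>\<^sup>d\<close> rather than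
  on the sphere. The surface measure is \<open>d\<close> times the image of Lebesgue measure on the punctured
  unit ball under \<open>z \<mapsto> z / |z|\<close>, so in polar coordinates the ball integral of \<open>|z|\<^sup>p f(z / |z|)\<close>
  is the sphere integral of \<open>f\<close> divided by \<open>p + d\<close>. For a potential \<open>\<Phi>\<close> vanishing outside the
  unit ball, the integral of a directional derivative of \<open>\<Phi>\<close> is zero (Fubini along lines).
  Choosing for \<open>\<Phi>\<close> the homogeneous extension of \<open>(1 + m\<^sup>T x)\<^sup>k\<close> times radial cut-offs, one
  such identity along \<open>m\<close> gives the component of the mean along \<open>m\<close>, and two identities along
  a direction \<open>w \<bottom> m\<close> show that the component along \<open>w\<close> vanishes.
\<close>

section \<open>The surface measure as an image of Lebesgue measure\<close>

(* The value at 0 only matters for lying on the sphere: {0} is a null set. *)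
definition radial_proj :: "'a::euclidean_space \<Rightarrow> 'a" where
  "radial_proj z = (if z = 0 then (SOME b. b \<in> Basis) else z /\<^sub>R norm z)"

definition punctured_ball :: "'a::euclidean_space set" where
  "punctured_ball = cball 0 1 - {0}"

lemma radial_proj_in_sphere: "radial_proj (z::'a::euclidean_space) \<in> sphere 0 1"
proof (cases "z = 0")
  case True
  have "(SOME b. b \<in> (Basis::'a set)) \<in> Basis" by (rule someI_ex) (use nonempty_Basis in blast)
  then show ?thesis using True by (simp add: radial_proj_def)
qed (simp add: radial_proj_def)

lemma norm_radial_proj [simp]: "norm (radial_proj (z::'a::euclidean_space)) = 1"
  using radial_proj_in_sphere[of z] by simp

lemma radial_proj_measurable [measurable]: "radial_proj \<in> borel_measurable borel"
  unfolding radial_proj_def by measurable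

lemma punctured_ball_sets [measurable]: "punctured_ball \<in> sets borel"
  unfolding punctured_ball_def by simp

lemma radial_proj_nonzero: "z \<noteq> 0 \<Longrightarrow> radial_proj z = z /\<^sub>R norm z"
  by (simp add: radial_proj_def)

lemma radial_proj_scaleR: "c > 0 \<Longrightarrow> radial_proj (c *\<^sub>R z) = radial_proj z"
  by (cases "z = 0") (auto simp: radial_proj_def)

lemma radial_proj_unit: "norm x = 1 \<Longrightarrow> radial_proj x = x"
  by (auto simp: radial_proj_def)

lemma norm_scaleR_radial_proj: "z \<noteq> 0 \<Longrightarrow> norm z *\<^sub>R radial_proj z = z"
  by (simp add: radial_proj_nonzero)

lemma inner_radial_proj: "z \<noteq> 0 \<Longrightarrow> v \<bullet> z = norm z * (v \<bullet> radial_proj z)"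
  by (simp add: radial_proj_nonzero)

lemma abs_inner_le_norm_unit: "norm m = 1 \<Longrightarrow> \<bar>m \<bullet> z\<bar> \<le> norm z"
  using Cauchy_Schwarz_ineq2[of m z] by simp

lemma cone_eq_punctured_ball_vimage:
  assumes "A \<subseteq> sphere (0::'a::euclidean_space) 1"
  shows "(\<lambda>(t::real, x). t *\<^sub>R x) ` ({0<..1} \<times> A) = radial_proj -` A \<inter> punctured_ball"
proof
  show "(\<lambda>(t::real, x). t *\<^sub>R x) ` ({0<..1} \<times> A) \<subseteq> radial_proj -` A \<inter> punctured_ball"
  proof clarify
    fix t x assume "t \<in> {0<..1::real}" "x \<in> A"
    moreover have "norm x = 1" using assms \<open>x \<in> A\<close> by auto
    ultimately show "t *\<^sub>R x \<in> radial_proj -` A \<inter> punctured_ball"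
      by (auto simp: radial_proj_scaleR radial_proj_unit punctured_ball_def)
  qed
  show "radial_proj -` A \<inter> punctured_ball \<subseteq> (\<lambda>(t::real, x). t *\<^sub>R x) ` ({0<..1} \<times> A)"
  proof
    fix z assume z: "z \<in> radial_proj -` A \<inter> punctured_ball"
    then have "(norm z, radial_proj z) \<in> {0<..1} \<times> A"
      by (auto simp: punctured_ball_def)
    moreover have "z = (\<lambda>(t, x). t *\<^sub>R x) (norm z, radial_proj z)"
      using z by (simp add: norm_scaleR_radial_proj punctured_ball_def)
    ultimately show "z \<in> (\<lambda>(t::real, x). t *\<^sub>R x) ` ({0<..1} \<times> A)"
      by (rule rev_image_eqI)
  qed
qed

lemma sphere_surface_eq_distr:
  "(sphere_surface :: 'a::euclidean_space measure) =
     distr (density lborel (\<lambda>z. ennreal (real DIM('a) * indicator punctured_ball z)))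
       (restrict_space borel (sphere 0 1)) radial_proj"
  (is "_ = distr ?N _ _")
proof -
  let ?S = "restrict_space borel (sphere (0::'a) 1)"
  have proj: "radial_proj \<in> measurable ?N ?S"
    by (rule measurable_restrict_space2) (auto simp: radial_proj_in_sphere)
  have space: "space (distr ?N ?S radial_proj) = sphere 0 1"
    by (simp add: space_restrict_space)
  have "(sphere_surface :: 'a measure) =
      measure_of (space (distr ?N ?S radial_proj)) (sets (distr ?N ?S radial_proj)) (emeasure (distr ?N ?S radial_proj))"
    unfolding sphere_surface_def space sets_distr
  proof (rule measure_of_eq)
    show "sets ?S \<subseteq> Pow (sphere 0 1)"
      using sets.sets_into_space[of _ ?S] by (auto simp: space_restrict_space)
    fix a assume "a \<in> sigma_sets (sphere 0 1) (sets ?S)"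
    then have a: "a \<in> sets ?S"
      using sigma_algebra.sigma_sets_eq[OF sets.sigma_algebra_axioms[of ?S]]
      by (simp add: space_restrict_space)
    then have asub: "a \<subseteq> sphere 0 1" and [measurable]: "a \<in> sets borel"
      using sets.sets_into_space[OF a] by (auto simp: space_restrict_space sets_restrict_space_iff)
    have [measurable]: "radial_proj -` a \<in> sets borel"
      by (rule measurable_sets_borel[OF radial_proj_measurable]) simp
    have "emeasure (distr ?N ?S radial_proj) a = emeasure ?N (radial_proj -` a)"
      by (simp add: emeasure_distr[OF proj a])
    also have "\<dots> = (\<integral>\<^sup>+z. ennreal (real DIM('a)) * indicator (radial_proj -` a \<inter> punctured_ball) z \<partial>lborel)"
      by (subst emeasure_density) (auto intro!: nn_integral_cong simp: ennreal_mult split: split_indicator)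
    also have "\<dots> = ennreal (real DIM('a)) * emeasure lborel (radial_proj -` a \<inter> punctured_ball)"
      by (rule nn_integral_cmult_indicator) simp
    finally show "of_nat DIM('a) * emeasure lborel ((\<lambda>(t::real, x). t *\<^sub>R x) ` ({0<..1} \<times> a))
        = emeasure (distr ?N ?S radial_proj) a"
      using cone_eq_punctured_ball_vimage[OF asub] by (simp add: ennreal_of_nat_eq_real_of_nat)
  qed
  also have "\<dots> = distr ?N ?S radial_proj"
    by (rule measure_of_of_measure)
  finally show ?thesis .
qed

lemma space_sphere_surface [simp]: "space (sphere_surface :: 'a::euclidean_space measure) = sphere 0 1"
  by (simp add: sphere_surface_eq_distr space_restrict_space)

lemma measurable_sphere_surface [measurable (raw)]:
  "f \<in> borel_measurable borel \<Longrightarrow> f \<in> borel_measurable (sphere_surface :: 'a::euclidean_space measure)"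
  by (simp add: sphere_surface_eq_distr measurable_restrict_space1)

lemma measurable_radial_proj_sphere:
  "radial_proj \<in> measurable (density lborel f) (restrict_space borel (sphere (0::'a::euclidean_space) 1))"
  by (rule measurable_restrict_space2) (auto simp: radial_proj_in_sphere)

lemma integral_sphere_surface:
  fixes f :: "'a::euclidean_space \<Rightarrow> real"
  assumes [measurable]: "f \<in> borel_measurable borel"
  shows "(\<integral>x. f x \<partial>sphere_surface) =
    real DIM('a) * (\<integral>z. indicator punctured_ball z * f (radial_proj z) \<partial>lborel)"
proof -
  have "(\<integral>x. f x \<partial>sphere_surface) =
      (\<integral>z. f (radial_proj z) \<partial>density lborel (\<lambda>z. ennreal (real DIM('a) * indicator punctured_ball z)))"
    unfolding sphere_surface_eq_distr
    by (rule integral_distr[OF measurable_radial_proj_sphere]) (simp add: measurable_restrict_space1)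
  also have "\<dots> = (\<integral>z. (real DIM('a) * indicator punctured_ball z) *\<^sub>R f (radial_proj z) \<partial>lborel)"
    by (rule integral_density) auto
  finally show ?thesis
    by (simp add: mult.assoc)
qed

lemma emeasure_sphere_surface:
  "emeasure (sphere_surface :: 'a::euclidean_space measure) (sphere 0 1) =
    ennreal (real DIM('a)) * emeasure lborel (punctured_ball :: 'a set)"
proof -
  let ?N = "density lborel (\<lambda>z::'a. ennreal (real DIM('a) * indicator punctured_ball z))"
  have "sphere 0 1 \<in> sets (restrict_space borel (sphere (0::'a) 1))"
    using sets.top[of "restrict_space borel (sphere (0::'a) 1)"] by (simp add: space_restrict_space)
  then have "emeasure (sphere_surface :: 'a measure) (sphere 0 1) = emeasure ?N (radial_proj -` sphere 0 1 \<inter> space ?N)"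
    unfolding sphere_surface_eq_distr by (rule emeasure_distr[OF measurable_radial_proj_sphere])
  also have "radial_proj -` sphere 0 1 \<inter> space ?N = UNIV"
    using radial_proj_in_sphere by auto
  also have "emeasure ?N UNIV = ennreal (real DIM('a)) * emeasure lborel (punctured_ball :: 'a set)"
    by (subst emeasure_density)
       (auto simp: ennreal_mult ennreal_indicator nn_integral_cmult)
  finally show ?thesis .
qed

lemma emeasure_punctured_ball_finite: "emeasure lborel (punctured_ball :: 'a::euclidean_space set) < \<infinity>"
proof -
  have "emeasure lborel (punctured_ball :: 'a set) \<le> emeasure lborel (cball (0::'a) 1)"
    by (rule emeasure_mono) (auto simp: punctured_ball_def)
  also have "\<dots> < \<infinity>"
    using emeasure_bounded_finite[of "cball (0::'a) 1"] by simp
  finally show ?thesis .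
qed

lemma integrable_bounded_punctured_ball:
  fixes f :: "'a::euclidean_space \<Rightarrow> real"
  assumes "f \<in> borel_measurable borel" and "\<And>z. \<bar>f z\<bar> \<le> K * indicator punctured_ball z"
  shows "integrable lborel f"
proof (rule Bochner_Integration.integrable_bound)
  show "integrable lborel (\<lambda>z::'a. K * indicator punctured_ball z)"
    using emeasure_punctured_ball_finite by (intro integrable_mult_right integrable_real_indicator) auto
qed (use assms in \<open>auto intro: order.trans[OF _ abs_ge_self]\<close>)

lemma finite_measure_sphere_surface: "finite_measure (sphere_surface :: 'a::euclidean_space measure)"
  by (rule finite_measureI)
     (use emeasure_punctured_ball_finite[where 'a='a] in \<open>simp add: emeasure_sphere_surface ennreal_mult_eq_top_iff\<close>)

lemma integrable_sphere_surface_bounded: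
  fixes f :: "'a::euclidean_space \<Rightarrow> real"
  assumes "f \<in> borel_measurable borel" and "\<And>x. norm x = 1 \<Longrightarrow> \<bar>f x\<bar> \<le> B"
  shows "integrable sphere_surface f"
proof -
  interpret finite_measure "sphere_surface :: 'a measure"
    by (rule finite_measure_sphere_surface)
  show ?thesis
    by (rule integrable_const_bound[where B=B]) (use assms in auto)
qed

lemma continuous_on_sphere_bounded:
  fixes f :: "'a::euclidean_space \<Rightarrow> real"
  assumes "continuous_on (sphere 0 1) f"
  obtains B where "\<And>x. norm x = 1 \<Longrightarrow> \<bar>f x\<bar> \<le> B"
proof -
  have "bounded (f ` sphere 0 1)"
    by (intro compact_imp_bounded compact_continuous_image assms compact_sphere)
  then obtain B where "\<forall>x\<in>sphere 0 1. \<bar>f x\<bar> \<le> B"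
    by (auto simp: bounded_real)
  then show ?thesis
    by (intro that[of B]) simp
qed

lemma integrable_sphere_surface_continuous:
  fixes f :: "'a::euclidean_space \<Rightarrow> real"
  assumes "f \<in> borel_measurable borel" and "continuous_on (sphere 0 1) f"
  shows "integrable sphere_surface f"
  using continuous_on_sphere_bounded[OF assms(2)] integrable_sphere_surface_bounded[OF assms(1)] by metis

lemma ball_half_unit_cone:
  assumes m: "norm m = 1" and z: "z \<in> ball (m /\<^sub>R 2) (1 / 2)"
  shows "z \<in> punctured_ball \<and> m \<bullet> radial_proj z > 0"
proof -
  have dz: "norm (z - m /\<^sub>R 2) < 1 / 2"
    using z by (simp add: dist_norm norm_minus_commute)
  have "norm z \<le> norm (z - m /\<^sub>R 2) + norm (m /\<^sub>R 2)"
    using norm_triangle_ineq[of "z - m /\<^sub>R 2" "m /\<^sub>R 2"] by simp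
  then have "norm z \<le> 1"
    using dz m by simp
  have "m \<bullet> z = 1 / 2 + m \<bullet> (z - m /\<^sub>R 2)"
    using m by (simp add: inner_diff_right norm_eq_1)
  moreover have "\<bar>m \<bullet> (z - m /\<^sub>R 2)\<bar> < 1 / 2"
    using abs_inner_le_norm_unit[OF m, of "z - m /\<^sub>R 2"] dz by linarith
  ultimately have "m \<bullet> z > 0"
    by linarith
  then have "z \<noteq> 0"
    by auto
  with \<open>m \<bullet> z > 0\<close> \<open>norm z \<le> 1\<close> show ?thesis
    by (simp add: punctured_ball_def radial_proj_nonzero)
qed

lemma integral_sphere_surface_pos:
  fixes f :: "'a::euclidean_space \<Rightarrow> real" and m :: 'a
  assumes m: "norm m = 1" and [measurable]: "f \<in> borel_measurable borel"
    and cont: "continuous_on (sphere 0 1) f" and nonneg: "\<And>x. norm x = 1 \<Longrightarrow> 0 \<le> f x"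
    and pos: "\<And>x. norm x = 1 \<Longrightarrow> m \<bullet> x > 0 \<Longrightarrow> f x \<ge> c" and c: "c > 0"
  shows "(\<integral>x. f x \<partial>sphere_surface) > 0"
proof -
  let ?A = "ball (m /\<^sub>R 2) (1 / 2)"
  obtain B where B: "\<And>x. norm x = 1 \<Longrightarrow> \<bar>f x\<bar> \<le> B"
    using continuous_on_sphere_bounded[OF cont] by blast
  have "integrable lborel (\<lambda>z::'a. indicator punctured_ball z * f (radial_proj z))"
    by (rule integrable_bounded_punctured_ball[where K=B]) (use B in \<open>auto split: split_indicator\<close>)
  moreover have "integrable lborel (\<lambda>z::'a. c * indicator ?A z)"
    using emeasure_bounded_finite[of ?A] by (intro integrable_mult_right integrable_real_indicator) auto
  ultimately have "(\<integral>z. c * indicator ?A z \<partial>lborel) \<le> (\<integral>z. indicator punctured_ball z * f (radial_proj z) \<partial>lborel)"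
    using ball_half_unit_cone[OF m] pos[of "radial_proj _"] nonneg[of "radial_proj _"]
    by (intro integral_mono) (auto split: split_indicator)
  moreover have "0 < (\<integral>z. c * indicator ?A z \<partial>lborel)"
    using c content_ball_pos[of "1 / 2" "m /\<^sub>R 2"] by simp
  ultimately show ?thesis
    by (simp add: integral_sphere_surface)
qed

section \<open>Polar coordinates\<close>

lemma nn_integral_lborel_scaleR:
  fixes f :: "'a::euclidean_space \<Rightarrow> ennreal"
  assumes [measurable]: "f \<in> borel_measurable borel" and c: "c \<noteq> 0"
  shows "(\<integral>\<^sup>+x. f x \<partial>lborel) = ennreal (\<bar>c\<bar> ^ DIM('a)) * (\<integral>\<^sup>+x. f (c *\<^sub>R x) \<partial>lborel)"
  by (subst lborel_affine[OF c, of 0]) (simp add: nn_integral_density nn_integral_distr nn_integral_cmult)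

lemma nn_integral_radial_scale:
  fixes b :: "'a::euclidean_space \<Rightarrow> ennreal"
  assumes [measurable]: "b \<in> borel_measurable borel" and R: "R \<ge> 0"
  shows "(\<integral>\<^sup>+z. indicator (cball 0 R - {0}) z * b (radial_proj z) \<partial>lborel)
       = ennreal (R ^ DIM('a)) * (\<integral>\<^sup>+z. indicator punctured_ball z * b (radial_proj z) \<partial>lborel)"
proof (cases "R = 0")
  case False
  have [measurable]: "cball (0::'a) R - {0} \<in> sets borel" by auto
  have "indicator (cball 0 R - {0}) (R *\<^sub>R z) = (indicator punctured_ball z :: ennreal)" for z :: 'a
    using R False by (auto simp: punctured_ball_def split: split_indicator)
  then show ?thesis
    using R False by (subst nn_integral_lborel_scaleR[where c=R]) (auto simp: radial_proj_scaleR)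
qed simp

lemma nn_integral_power_density:
  assumes "t \<ge> 0" and "n > 0"
  shows "(\<integral>\<^sup>+r. ennreal (real n * r ^ (n - 1)) * indicator {0<..t} r \<partial>lborel) = ennreal (t ^ n)"
proof -
  have "(\<integral>\<^sup>+r. ennreal (real n * r ^ (n - 1)) * indicator {0<..t} r \<partial>lborel)
      = (\<integral>\<^sup>+r. ennreal (real n * r ^ (n - 1)) * indicator {0..t} r \<partial>lborel)"
    by (rule nn_integral_cong_AE)
       (use AE_lborel_singleton[of "0::real"] in \<open>eventually_elim, auto split: split_indicator\<close>)
  also have "\<dots> = ennreal (t ^ n - 0 ^ n)"
    by (rule nn_integral_FTC_Icc) (use assms in \<open>auto intro!: derivative_eq_intros\<close>)
  finally show ?thesis
    using assms by simp
qed

lemma nn_integral_norm_tail: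
  fixes b :: "'a::euclidean_space \<Rightarrow> ennreal" and x :: real
  defines "y \<equiv> max 0 (min x 1)"
  assumes [measurable]: "b \<in> borel_measurable borel"
  shows "(\<integral>\<^sup>+z. indicator punctured_ball z * b (radial_proj z) * indicator {x<..} (norm z) \<partial>lborel)
      + ennreal (y ^ DIM('a)) * (\<integral>\<^sup>+z. indicator punctured_ball z * b (radial_proj z) \<partial>lborel)
    = (\<integral>\<^sup>+z. indicator punctured_ball z * b (radial_proj z) \<partial>lborel)"
proof -
  have [measurable]: "cball (0::'a) y - {0} \<in> sets borel"
    by auto
  have "0 \<le> y"
    by (simp add: y_def)
  have "(\<integral>\<^sup>+z. indicator punctured_ball z * b (radial_proj z) \<partial>lborel)
      = (\<integral>\<^sup>+z. indicator punctured_ball z * b (radial_proj z) * indicator {x<..} (norm z)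
            + indicator (cball 0 y - {0}) z * b (radial_proj z) \<partial>lborel)"
    by (intro nn_integral_cong)
       (auto simp: y_def punctured_ball_def max_def min_def split: split_indicator
             dest: zero_less_norm_iff[THEN iffD2])
  also have "\<dots> = (\<integral>\<^sup>+z. indicator punctured_ball z * b (radial_proj z) * indicator {x<..} (norm z) \<partial>lborel)
      + ennreal (y ^ DIM('a)) * (\<integral>\<^sup>+z. indicator punctured_ball z * b (radial_proj z) \<partial>lborel)"
    using nn_integral_radial_scale[of b y] by (subst nn_integral_add) (auto simp: \<open>0 \<le> y\<close>)
  finally show ?thesis ..
qed

lemma nn_integral_power_density_tail:
  fixes x :: real
  defines "y \<equiv> max 0 (min x 1)"
  assumes n: "n > 0"
  shows "(\<integral>\<^sup>+r. ennreal (real n * r ^ (n - 1)) * indicator {0<..1} r * indicator {x<..} r \<partial>lborel)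
      + ennreal (y ^ n) = 1"
proof -
  have "(1::ennreal) = (\<integral>\<^sup>+r. ennreal (real n * r ^ (n - 1)) * indicator {0<..1} r \<partial>lborel)"
    using nn_integral_power_density[of 1 n] n by simp
  also have "\<dots> = (\<integral>\<^sup>+r. ennreal (real n * r ^ (n - 1)) * indicator {0<..1} r * indicator {x<..} r
      + ennreal (real n * r ^ (n - 1)) * indicator {0<..y} r \<partial>lborel)"
    by (intro nn_integral_cong) (auto simp: y_def split: split_indicator)
  also have "\<dots> = (\<integral>\<^sup>+r. ennreal (real n * r ^ (n - 1)) * indicator {0<..1} r * indicator {x<..} r \<partial>lborel)
      + ennreal (y ^ n)"
    using n nn_integral_power_density[of y n] by (subst nn_integral_add) (auto simp: y_def)
  finally show ?thesis ..
qed

(* Dilating by R multiplies the mass of the punctured ball of radius R by R ^ d, whatever the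
   angular density b. *)
lemma distr_norm_punctured_ball:
  fixes b :: "'a::euclidean_space \<Rightarrow> ennreal"
  defines "I \<equiv> \<integral>\<^sup>+z. indicator punctured_ball z * b (radial_proj z) \<partial>lborel"
  assumes [measurable]: "b \<in> borel_measurable borel" and fin: "I \<noteq> \<infinity>"
  shows "distr (density lborel (\<lambda>z. indicator punctured_ball z * b (radial_proj z))) borel norm
       = density lborel (\<lambda>r. ennreal (real DIM('a) * r ^ (DIM('a) - 1)) * indicator {0<..1} r * I)"
    (is "?L = ?R")
proof (rule measure_eqI_lessThan)
  let ?d = "DIM('a)"
  have L: "emeasure ?L {x<..} =
      (\<integral>\<^sup>+z. indicator punctured_ball z * b (radial_proj z) * indicator {x<..} (norm z) \<partial>lborel)" for x
  proof -
    have [measurable]: "norm -` {x<..} \<in> sets (borel :: 'a measure)"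
      by (rule measurable_sets_borel[OF borel_measurable_norm]) auto
    show ?thesis
      by (subst emeasure_distr) (auto simp: emeasure_density intro!: nn_integral_cong split: split_indicator)
  qed
  show "sets ?L = sets borel" "sets ?R = sets borel" by auto
  show "emeasure ?L {x<..} < \<infinity>" for x
  proof -
    have "emeasure ?L {x<..} \<le> I"
      unfolding L I_def by (intro nn_integral_mono) (auto split: split_indicator)
    then show ?thesis
      using fin by (simp add: less_top order.strict_trans1)
  qed
  show "emeasure ?L {x<..} = emeasure ?R {x<..}" for x
  proof -
    let ?c = "ennreal (max 0 (min x 1) ^ ?d)"
    have "emeasure ?L {x<..} + ?c * I = I"
      unfolding L I_def by (rule nn_integral_norm_tail) simp
    also have "\<dots> = I * ((\<integral>\<^sup>+r. ennreal (real ?d * r ^ (?d - 1)) * indicator {0<..1} r * indicator {x<..} r \<partial>lborel) + ?c)"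
      by (subst nn_integral_power_density_tail) simp_all
    also have "\<dots> = emeasure ?R {x<..} + ?c * I"
      by (subst emeasure_density)
         (auto simp: nn_integral_cmult[symmetric] distrib_left ac_simps intro!: nn_integral_cong)
    finally show ?thesis
      using fin by (simp add: ennreal_mult_eq_top_iff)
  qed
qed

lemma integral_polar_nonneg:
  fixes b :: "'a::euclidean_space \<Rightarrow> real" and h :: "real \<Rightarrow> real"
  assumes [measurable]: "b \<in> borel_measurable borel" "h \<in> borel_measurable borel"
    and b: "\<And>x. norm x = 1 \<Longrightarrow> 0 \<le> b x \<and> b x \<le> B"
  shows "(\<integral>z. indicator punctured_ball z * h (norm z) * b (radial_proj z) \<partial>lborel)
       = (\<integral>r. indicator {0<..1} r * r ^ (DIM('a) - 1) * h r \<partial>lborel) * (\<integral>x. b x \<partial>sphere_surface)"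
proof -
  let ?d = "DIM('a)"
  define I where "I = (\<integral>z. indicator punctured_ball z * b (radial_proj z) \<partial>lborel)"
  have b_proj: "0 \<le> b (radial_proj z)" "b (radial_proj z) \<le> B" for z :: 'a
    using b[of "radial_proj z"] by auto
  have "integrable lborel (\<lambda>z::'a. indicator punctured_ball z * b (radial_proj z))"
    by (rule integrable_bounded_punctured_ball[where K=B])
       (use b_proj in \<open>auto split: split_indicator\<close>)
  then have "(\<integral>\<^sup>+z. ennreal (indicator punctured_ball z * b (radial_proj z)) \<partial>lborel) = ennreal I"
    unfolding I_def by (rule nn_integral_eq_integral) (use b_proj in \<open>auto split: split_indicator\<close>)
  moreover have dens: "(\<lambda>z. ennreal (indicator punctured_ball z * b (radial_proj z)))
      = (\<lambda>z. indicator punctured_ball z * ennreal (b (radial_proj z)))"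
    by (auto split: split_indicator)
  ultimately have I: "(\<integral>\<^sup>+z. indicator punctured_ball z * ennreal (b (radial_proj z)) \<partial>lborel) = ennreal I"
    by simp
  have I_nonneg: "0 \<le> I"
    unfolding I_def by (intro integral_nonneg_AE AE_I2) (use b_proj in \<open>auto split: split_indicator\<close>)
  have r_density: "(\<lambda>r. ennreal (real ?d * r ^ (?d - 1)) * indicator {0<..1} r * ennreal I)
      = (\<lambda>r. ennreal (real ?d * r ^ (?d - 1) * indicator {0<..1} r * I))"
    using I_nonneg by (auto simp: ennreal_mult split: split_indicator)
  have "(\<integral>z. indicator punctured_ball z * h (norm z) * b (radial_proj z) \<partial>lborel)
      = (\<integral>z. h (norm z) \<partial>density lborel (\<lambda>z. ennreal (indicator punctured_ball z * b (radial_proj z))))"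
    by (subst integral_density) (use b_proj in \<open>auto simp: mult_ac\<close>)
  also have "\<dots> = (\<integral>r. h r \<partial>distr (density lborel (\<lambda>z. indicator punctured_ball z * ennreal (b (radial_proj z)))) borel norm)"
    unfolding dens by (rule integral_distr[symmetric]) auto
  also have "\<dots> = (\<integral>r. h r \<partial>density lborel (\<lambda>r. ennreal (real ?d * r ^ (?d - 1) * indicator {0<..1} r * I)))"
    by (subst distr_norm_punctured_ball) (use I r_density in auto)
  also have "\<dots> = (\<integral>r. real ?d * I * (indicator {0<..1} r * r ^ (?d - 1) * h r) \<partial>lborel)"
    using I_nonneg by (subst integral_density) (auto simp: mult_ac split: split_indicator)
  also have "\<dots> = real ?d * I * (\<integral>r. indicator {0<..1} r * r ^ (?d - 1) * h r \<partial>lborel)"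
    by (rule integral_mult_right_zero)
  also have "real ?d * I = (\<integral>x. b x \<partial>sphere_surface)"
    by (simp add: integral_sphere_surface I_def)
  finally show ?thesis
    by (simp add: mult.commute)
qed

lemma integrable_polar:
  fixes b :: "'a::euclidean_space \<Rightarrow> real" and h :: "real \<Rightarrow> real"
  assumes [measurable]: "b \<in> borel_measurable borel" "h \<in> borel_measurable borel"
    and b: "\<And>x. norm x = 1 \<Longrightarrow> \<bar>b x\<bar> \<le> B"
    and h: "\<And>r. 0 < r \<Longrightarrow> r \<le> 1 \<Longrightarrow> \<bar>h r\<bar> \<le> C"
  shows "integrable lborel (\<lambda>z. indicator punctured_ball z * h (norm z) * b (radial_proj z))"
proof (rule integrable_bounded_punctured_ball[where K="C * B"])
  fix z :: 'a
  show "\<bar>indicator punctured_ball z * h (norm z) * b (radial_proj z)\<bar> \<le> C * B * indicator punctured_ball z"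
  proof (cases "z \<in> punctured_ball")
    case True
    then have "\<bar>h (norm z)\<bar> \<le> C"
      using h by (auto simp: punctured_ball_def)
    then show ?thesis
      using True b[of "radial_proj z"] by (simp add: abs_mult mult_mono)
  qed simp
qed simp

lemma integral_polar:
  fixes b :: "'a::euclidean_space \<Rightarrow> real" and h :: "real \<Rightarrow> real"
  assumes [measurable]: "b \<in> borel_measurable borel" "h \<in> borel_measurable borel"
    and b: "\<And>x. norm x = 1 \<Longrightarrow> \<bar>b x\<bar> \<le> B"
    and h: "\<And>r. 0 < r \<Longrightarrow> r \<le> 1 \<Longrightarrow> \<bar>h r\<bar> \<le> C"
  shows "(\<integral>z. indicator punctured_ball z * h (norm z) * b (radial_proj z) \<partial>lborel)
       = (\<integral>r. indicator {0<..1} r * r ^ (DIM('a) - 1) * h r \<partial>lborel) * (\<integral>x. b x \<partial>sphere_surface)"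
proof -
  let ?R = "\<integral>r. indicator {0<..1} r * r ^ (DIM('a) - 1) * h r \<partial>lborel"
  let ?F = "\<lambda>c (z::'a). indicator punctured_ball z * h (norm z) * c (radial_proj z)"
  have B: "0 \<le> B"
    using b[of "radial_proj 0"] by simp
  have nonneg: "integrable lborel (?F c) \<and> (\<integral>z. ?F c z \<partial>lborel) = ?R * (\<integral>x. c x \<partial>sphere_surface)"
    if [measurable]: "c \<in> borel_measurable borel" and c: "\<And>x. norm x = 1 \<Longrightarrow> 0 \<le> c x \<and> c x \<le> 2 * B" for c
  proof
    show "integrable lborel (?F c)"
      by (rule integrable_polar[OF _ _ _ h, where B="2 * B"]) (use c in \<open>auto simp: abs_le_iff\<close>)
    show "(\<integral>z. ?F c z \<partial>lborel) = ?R * (\<integral>x. c x \<partial>sphere_surface)"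
      by (rule integral_polar_nonneg[OF _ _ c]) auto
  qed
  have shift: "0 \<le> b x + B \<and> b x + B \<le> 2 * B" if "norm x = 1" for x
    using b[OF that] by linarith
  have "(\<integral>z. ?F b z \<partial>lborel) = (\<integral>z. ?F (\<lambda>x. b x + B) z - ?F (\<lambda>_. B) z \<partial>lborel)"
    by (simp add: algebra_simps)
  also have "\<dots> = ?R * (\<integral>x. b x + B \<partial>sphere_surface) - ?R * (\<integral>x. B \<partial>(sphere_surface :: 'a measure))"
    using nonneg[of "\<lambda>x. b x + B"] nonneg[of "\<lambda>_. B"] shift B by simp
  also have "\<dots> = ?R * (\<integral>x. b x \<partial>sphere_surface)"
    using b B by (simp add: right_diff_distrib[symmetric] integrable_sphere_surface_bounded[where B=B])
  finally show ?thesis .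
qed

lemma integral_unit_interval_power_powr:
  assumes p: "p \<ge> 0" and n: "n \<ge> 1"
  shows "(\<integral>r. indicator {0<..1} r * r ^ (n - 1) * r powr p \<partial>lborel) = 1 / (p + real n)"
proof -
  define q where "q = p + real n - 1"
  have q: "q \<ge> 0"
    using p n by (simp add: q_def)
  have powr_integral: "((\<lambda>x. x powr q) has_integral (1 powr (q + 1) / (q + 1))) {0..1}"
    by (rule has_integral_powr_from_0) (use q in auto)
  have "(\<integral>\<^sup>+x. ennreal (x powr q * indicator {0..1} x) \<partial>lborel)
      = (\<integral>\<^sup>+x. ennreal (x powr q) * indicator {0..1} x \<partial>lborel)"
    by (intro nn_integral_cong) (auto split: split_indicator)
  also have "\<dots> = ennreal (1 / (q + 1))"
    using nn_integral_has_integral_lebesgue'[OF _ powr_integral] by simp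
  finally have "has_bochner_integral lborel (\<lambda>x. x powr q * indicator {0..1} x) (1 / (q + 1))"
    by (intro has_bochner_integral_nn_integral) (use q in auto)
  have "AE x in lborel. indicator {0<..1} x * x ^ (n - 1) * x powr p = x powr q * indicator {0..1} x"
    using AE_lborel_singleton[of 0]
  proof eventually_elim
    case (elim x)
    have "x ^ (n - 1) * x powr p = x powr q" if "0 < x"
      using that n by (simp add: q_def powr_realpow[symmetric] powr_add[symmetric] of_nat_diff algebra_simps)
    then show ?case
      using elim by (auto split: split_indicator)
  qed
  then have "(\<integral>r. indicator {0<..1} r * r ^ (n - 1) * r powr p \<partial>lborel)
      = (\<integral>x. x powr q * indicator {0..1} x \<partial>lborel)"
    by (rule integral_cong_AE[rotated 2]) auto
  with \<open>has_bochner_integral lborel _ _\<close> show ?thesis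
    by (simp add: has_bochner_integral_integral_eq q_def)
qed

lemma
  fixes b :: "'a::euclidean_space \<Rightarrow> real"
  assumes [measurable]: "b \<in> borel_measurable borel"
    and b: "\<And>x. norm x = 1 \<Longrightarrow> \<bar>b x\<bar> \<le> B" and p: "p \<ge> 0"
  shows integrable_polar_powr:
      "integrable lborel (\<lambda>z. indicator punctured_ball z * norm z powr p * b (radial_proj z))"
    and integral_polar_powr:
      "(\<integral>z. indicator punctured_ball z * norm z powr p * b (radial_proj z) \<partial>lborel)
        = (\<integral>x. b x \<partial>sphere_surface) / (p + DIM('a))"
proof -
  have powr_le: "\<bar>r powr p\<bar> \<le> 1" if "0 < r" "r \<le> 1" for r :: real
    using that p by (simp add: powr_le1)
  show "integrable lborel (\<lambda>z. indicator punctured_ball z * norm z powr p * b (radial_proj z))"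
    by (rule integrable_polar[OF _ _ b powr_le]) auto
  have "1 \<le> DIM('a)"
    by (simp add: Suc_le_eq)
  then show "(\<integral>z. indicator punctured_ball z * norm z powr p * b (radial_proj z) \<partial>lborel)
        = (\<integral>x. b x \<partial>sphere_surface) / (p + DIM('a))"
    using p integral_unit_interval_power_powr[OF p \<open>1 \<le> DIM('a)\<close>]
    by (subst integral_polar[OF _ _ b powr_le]) auto
qed

(* The radial weights r powr p * (1 - r\<^sup>2) and 2 * r powr (p + 2) have moments
   2 / ((p + d) * (p + d + 2)) and 2 / (p + d + 2) against r ^ (d - 1) dr. *)
lemma integral_sphere_eq_of_ball_integral_eq_0:
  fixes f g :: "'a::euclidean_space \<Rightarrow> real"
  assumes [measurable]: "f \<in> borel_measurable borel" "g \<in> borel_measurable borel"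
    and f: "\<And>x. norm x = 1 \<Longrightarrow> \<bar>f x\<bar> \<le> B" and g: "\<And>x. norm x = 1 \<Longrightarrow> \<bar>g x\<bar> \<le> B" and p: "p \<ge> 0"
    and zero: "(\<integral>z. indicator punctured_ball z * (norm z powr p * (1 - (norm z)\<^sup>2) * f (radial_proj z)
                   - 2 * norm z powr (p + 2) * g (radial_proj z)) \<partial>lborel) = 0"
  shows "(\<integral>x. f x \<partial>sphere_surface) = (p + DIM('a)) * (\<integral>x. g x \<partial>sphere_surface)"
proof -
  let ?P = "\<lambda>q c (z::'a). indicator punctured_ball z * norm z powr q * c (radial_proj z)"
  let ?F = "\<integral>x. f x \<partial>sphere_surface" and ?G = "\<integral>x. g x \<partial>sphere_surface" and ?d = "real DIM('a)"
  have split: "indicator punctured_ball z * (norm z powr p * (1 - (norm z)\<^sup>2) * f (radial_proj z)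
                   - 2 * norm z powr (p + 2) * g (radial_proj z))
      = ?P p f z - ?P (p + 2) f z - 2 * ?P (p + 2) g z" for z :: 'a
    by (cases "z = 0") (simp_all add: powr_add algebra_simps power2_eq_square)
  have "0 = (\<integral>z. ?P p f z - ?P (p + 2) f z - 2 * ?P (p + 2) g z \<partial>lborel)"
    using zero by (simp only: split)
  also have "\<dots> = ?F / (p + ?d) - ?F / (p + ?d + 2) - 2 * (?G / (p + ?d + 2))"
    using p f g
    by (simp add: integrable_polar_powr[where B=B] integral_polar_powr[where B=B] add_ac)
  finally have eq: "0 = ?F / (p + ?d) - ?F / (p + ?d + 2) - 2 * (?G / (p + ?d + 2))" .
  have "0 < p + ?d"
    by (intro add_nonneg_pos p) simp
  with eq[symmetric] show ?thesis
    by (auto simp: divide_simps add_pos_pos split: if_splits) (simp add: algebra_simps)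
qed

lemma integral_sphere_eq_of_flux_eq_0:
  fixes f g \<phi> :: "'a::euclidean_space \<Rightarrow> real"
  assumes [measurable]: "f \<in> borel_measurable borel" "g \<in> borel_measurable borel" "\<phi> \<in> borel_measurable borel"
    and f: "continuous_on (sphere 0 1) f" and g: "continuous_on (sphere 0 1) g" and p: "p \<ge> 0"
    and outside: "\<And>z. norm z > 1 \<Longrightarrow> \<phi> z = 0"
    and polar: "\<And>z. z \<in> punctured_ball \<Longrightarrow> \<phi> z =
      norm z powr p * (1 - (norm z)\<^sup>2) * f (radial_proj z) - 2 * norm z powr (p + 2) * g (radial_proj z)"
    and zero: "(\<integral>z. \<phi> z \<partial>lborel) = 0"
  shows "(\<integral>x. f x \<partial>sphere_surface) = (p + DIM('a)) * (\<integral>x. g x \<partial>sphere_surface)"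
proof -
  obtain Bf Bg where Bf: "\<And>x. norm x = 1 \<Longrightarrow> \<bar>f x\<bar> \<le> Bf" and Bg: "\<And>x. norm x = 1 \<Longrightarrow> \<bar>g x\<bar> \<le> Bg"
    using continuous_on_sphere_bounded[OF f] continuous_on_sphere_bounded[OF g] by metis
  have "AE z in lborel. \<phi> z = indicator punctured_ball z * (norm z powr p * (1 - (norm z)\<^sup>2) * f (radial_proj z)
      - 2 * norm z powr (p + 2) * g (radial_proj z))"
    using AE_lborel_singleton[of 0]
    by eventually_elim (auto simp: punctured_ball_def polar outside split: split_indicator)
  then have "(\<integral>z. indicator punctured_ball z * (norm z powr p * (1 - (norm z)\<^sup>2) * f (radial_proj z)
      - 2 * norm z powr (p + 2) * g (radial_proj z)) \<partial>lborel) = 0"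
    using zero by (subst integral_cong_AE[symmetric]) auto
  then show ?thesis
    using Bf Bg by (intro integral_sphere_eq_of_ball_integral_eq_0[where B="max Bf Bg"] p) (auto simp: le_max_iff_disj)
qed

section \<open>Integration by parts along lines\<close>

lemma integrable_bounded_support:
  fixes f :: "'a::euclidean_space \<Rightarrow> real"
  assumes "f \<in> borel_measurable borel" and "\<And>z. \<bar>f z\<bar> \<le> K" and "\<And>z. norm z > R \<Longrightarrow> f z = 0"
  shows "integrable lborel f"
proof (rule integrableI_bounded_set[where A="cball 0 R" and B=K])
  show "emeasure lborel (cball (0::'a) R) < \<infinity>"
    using emeasure_bounded_finite[of "cball (0::'a) R"] by simp
qed (use assms in auto)

lemma integral_lborel_translate:
  fixes f :: "'a::euclidean_space \<Rightarrow> real"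
  assumes [measurable]: "f \<in> borel_measurable borel"
  shows "(\<integral>x. f (x + a) \<partial>lborel) = (\<integral>x. f x \<partial>lborel)"
proof -
  have "(\<integral>x. f x \<partial>lborel) = (\<integral>x. f x \<partial>distr lborel borel ((+) a))"
    by (simp add: lborel_distr_plus)
  also have "\<dots> = (\<integral>x. f (a + x) \<partial>lborel)"
    by (rule integral_distr) auto
  finally show ?thesis
    by (simp add: add.commute)
qed

lemma integral_unit_interval_FTC:
  fixes \<phi> \<gamma> :: "real \<Rightarrow> real"
  assumes [measurable]: "\<gamma> \<in> borel_measurable borel" and \<gamma>: "\<And>s. \<bar>\<gamma> s\<bar> \<le> K"
    and cont: "continuous_on {0..1} \<phi>" and S: "finite S"
    and deriv: "\<And>s. s \<in> {0<..<1} - S \<Longrightarrow> (\<phi> has_real_derivative \<gamma> s) (at s)"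
  shows "(\<integral>s. indicator {0..1} s * \<gamma> s \<partial>lborel) = \<phi> 1 - \<phi> 0"
proof -
  have "set_integrable lborel {0..1} \<gamma>"
    unfolding set_integrable_def
    by (rule integrableI_bounded_set[where A="{0..1}" and B=K]) (use \<gamma> in \<open>auto split: split_indicator\<close>)
  have "(\<integral>s. indicator {0..1} s * \<gamma> s \<partial>lborel) = (LINT s:{0..1}|lborel. \<gamma> s)"
    by (simp add: set_lebesgue_integral_def)
  also have "\<dots> = integral {0..1} \<gamma>"
    by (rule set_borel_integral_eq_integral(2)) fact
  also have "(\<gamma> has_integral (\<phi> 1 - \<phi> 0)) {0..1}"
    by (rule fundamental_theorem_of_calculus_interior_strong[OF S])
       (use deriv cont in \<open>auto simp: has_real_derivative_iff_has_vector_derivative\<close>)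
  then have "integral {0..1} \<gamma> = \<phi> 1 - \<phi> 0"
    by (rule integral_unique)
  finally show ?thesis .
qed

lemma bounded_continuous_zero_outside_ball:
  fixes \<Phi> :: "'a::euclidean_space \<Rightarrow> real"
  assumes "continuous_on UNIV \<Phi>" and "\<And>z. norm z > 1 \<Longrightarrow> \<Phi> z = 0"
  obtains K where "\<And>z. \<bar>\<Phi> z\<bar> \<le> K"
proof -
  have "bounded (\<Phi> ` cball 0 1)"
    by (intro compact_imp_bounded compact_continuous_image continuous_on_subset[OF assms(1)]) auto
  then obtain K where "\<forall>z\<in>cball 0 1. \<bar>\<Phi> z\<bar> \<le> K"
    by (auto simp: bounded_real)
  then have "\<bar>\<Phi> z\<bar> \<le> \<bar>K\<bar>" for z
    using assms(2)[of z] by (cases "norm z \<le> 1") (auto intro: order.trans[OF _ abs_ge_self])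
  then show ?thesis
    by (rule that)
qed

lemma integrable_segment_sweep:
  fixes g :: "'a::euclidean_space \<Rightarrow> real" and v :: 'a
  assumes [measurable]: "g \<in> borel_measurable borel"
    and g: "\<And>z. \<bar>g z\<bar> \<le> K" and support: "\<And>z. norm z > 1 \<Longrightarrow> g z = 0"
  shows "integrable (lborel \<Otimes>\<^sub>M lborel) (\<lambda>(x, s). indicator {0..1} s * g (x + s *\<^sub>R v))"
proof (rule integrableI_bounded_set[where A="cball 0 (1 + norm v) \<times> {0..1}" and B=K])
  show "emeasure (lborel \<Otimes>\<^sub>M lborel) (cball (0::'a) (1 + norm v) \<times> {0..1::real}) < \<infinity>"
    using emeasure_bounded_finite[of "cball (0::'a) (1 + norm v)"]
    by (subst lborel.emeasure_pair_measure_Times) (auto simp: ennreal_mult_less_top)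
  show "AE p in lborel \<Otimes>\<^sub>M lborel. p \<notin> cball 0 (1 + norm v) \<times> {0..1} \<longrightarrow>
      (\<lambda>(x, s). indicator {0..1} s * g (x + s *\<^sub>R v)) p = 0"
  proof (intro AE_I2 impI)
    fix p :: "'a \<times> real"
    assume p: "p \<notin> cball 0 (1 + norm v) \<times> {0..1}"
    obtain x s where ps: "p = (x, s)"
      by (cases p)
    show "(\<lambda>(x, s). indicator {0..1} s * g (x + s *\<^sub>R v)) p = 0"
    proof (cases "s \<in> {0..1}")
      case True
      then have "norm x > 1 + norm v" "norm (s *\<^sub>R v) \<le> norm v"
        using p ps by (auto intro: mult_left_le_one_le)
      then have "norm (x + s *\<^sub>R v) > 1"
        using norm_triangle_ineq4[of "x + s *\<^sub>R v" "s *\<^sub>R v"] by simp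
      then show ?thesis
        using support ps by simp
    qed (simp add: ps)
  qed
qed (use g in \<open>auto split: split_indicator\<close>)

lemma integral_translate_diff_eq_0:
  fixes \<Phi> :: "'a::euclidean_space \<Rightarrow> real"
  assumes [measurable]: "\<Phi> \<in> borel_measurable borel"
    and bound: "\<And>z. \<bar>\<Phi> z\<bar> \<le> K" and support: "\<And>z. norm z > 1 \<Longrightarrow> \<Phi> z = 0"
  shows "(\<integral>x. \<Phi> (x + v) - \<Phi> x \<partial>lborel) = 0"
proof -
  have "\<Phi> (z + v) = 0" "\<Phi> z = 0" if "norm z > 1 + norm v" for z
  proof (rule_tac [!] support)
    have "norm z \<le> norm (z + v) + norm v"
      using norm_triangle_ineq4[of "z + v" v] by simp
    then show "norm (z + v) > 1" "norm z > 1"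
      using that norm_ge_zero[of v] by linarith+
  qed
  then have "integrable lborel (\<lambda>x. \<Phi> (x + v))" "integrable lborel \<Phi>"
    using bound by (auto intro!: integrable_bounded_support[where K=K and R="1 + norm v"])
  then show ?thesis
    by (simp add: integral_lborel_translate)
qed

(* Integrating g along the segments from x to x + v gives \<Phi> (x + v) - \<Phi> x, whose integral over
   x vanishes by translation invariance; by Fubini the same double integral is the integral of g. *)
lemma integral_directional_derivative_eq_0:
  fixes \<Phi> g :: "'a::euclidean_space \<Rightarrow> real" and v :: 'a
  assumes cont: "continuous_on UNIV \<Phi>" and [measurable]: "g \<in> borel_measurable borel"
    and g: "\<And>z. \<bar>g z\<bar> \<le> K"
    and support: "\<And>z. norm z > 1 \<Longrightarrow> \<Phi> z = 0" "\<And>z. norm z > 1 \<Longrightarrow> g z = 0"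
    and deriv: "AE x in lborel. \<exists>S. finite S \<and> (\<forall>s\<in>{0<..<1} - S.
        ((\<lambda>s. \<Phi> (x + s *\<^sub>R v)) has_real_derivative g (x + s *\<^sub>R v)) (at s))"
  shows "(\<integral>z. g z \<partial>lborel) = 0"
proof -
  have [measurable]: "\<Phi> \<in> borel_measurable borel"
    using cont by (rule borel_measurable_continuous_onI)
  define F where "F x s = indicator {0..1} s * g (x + s *\<^sub>R v)" for x :: 'a and s :: real
  have [measurable]: "case_prod F \<in> borel_measurable (lborel \<Otimes>\<^sub>M lborel)"
    unfolding F_def by measurable
  have "integrable (lborel \<Otimes>\<^sub>M lborel) (case_prod F)"
    unfolding F_def by (rule integrable_segment_sweep) (use g support(2) in auto)
  then have "(\<integral>s. (\<integral>x. F x s \<partial>lborel) \<partial>lborel) = (\<integral>x. (\<integral>s. F x s \<partial>lborel) \<partial>lborel)"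
    by (intro pair_sigma_finite.Fubini_integral) (simp add: pair_sigma_finite_def lborel.sigma_finite_measure_axioms)
  also have "\<dots> = (\<integral>x. \<Phi> (x + v) - \<Phi> x \<partial>lborel)"
  proof (rule integral_cong_AE)
    show "AE x in lborel. (\<integral>s. F x s \<partial>lborel) = \<Phi> (x + v) - \<Phi> x"
      using deriv
    proof eventually_elim
      case (elim x)
      then obtain S where "finite S" and "\<forall>s\<in>{0<..<1} - S.
          ((\<lambda>s. \<Phi> (x + s *\<^sub>R v)) has_real_derivative g (x + s *\<^sub>R v)) (at s)"
        by blast
      then show ?case
        unfolding F_def
        by (subst integral_unit_interval_FTC[where \<phi>="\<lambda>s. \<Phi> (x + s *\<^sub>R v)" and K=K])
           (auto intro!: continuous_on_compose2[OF cont] continuous_intros simp: g)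
    qed
  qed auto
  also have "\<dots> = 0"
  proof -
    obtain K\<Phi> where "\<And>z. \<bar>\<Phi> z\<bar> \<le> K\<Phi>"
      using bounded_continuous_zero_outside_ball[OF cont support(1)] by blast
    then show ?thesis
      by (intro integral_translate_diff_eq_0[where K=K\<Phi>]) (use support(1) in auto)
  qed
  finally have "(\<integral>s. (\<integral>x. F x s \<partial>lborel) \<partial>lborel) = 0" .
  moreover have "(\<integral>x. F x s \<partial>lborel) = indicator {0..1} s * (\<integral>z. g z \<partial>lborel)" for s
    by (simp add: F_def integral_lborel_translate[of g "s *\<^sub>R v"])
  ultimately show ?thesis
    by simp
qed

section \<open>Test potentials\<close>

lemma ps_unnorm_measurable [measurable]: "ps_unnorm k m \<in> borel_measurable borel"
  unfolding ps_unnorm_def by measurable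

(* Degree-k homogeneous extension of ps_unnorm k m to the whole space; its base norm z + m \<bullet> z
   vanishes only on the ray through -m, where differentiability fails. *)
definition ps_hom :: "real \<Rightarrow> 'a::euclidean_space \<Rightarrow> 'a \<Rightarrow> real" where
  "ps_hom k m z = (if k = 0 then 1 else (norm z + m \<bullet> z) powr k)"

lemma ps_hom_measurable [measurable]: "ps_hom k m \<in> borel_measurable borel"
  unfolding ps_hom_def by measurable

lemma ps_hom_nonneg: "0 \<le> ps_hom k m z"
  by (simp add: ps_hom_def)

lemma ps_hom_le:
  assumes "norm m = 1" "norm z \<le> 1" "0 \<le> k"
  shows "ps_hom k m z \<le> 2 powr k"
  using abs_inner_le_norm_unit[OF assms(1), of z] assms by (auto simp: ps_hom_def intro!: powr_mono2)

lemma ps_hom_unit: "norm x = 1 \<Longrightarrow> ps_hom k m x = ps_unnorm k m x"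
  by (simp add: ps_hom_def ps_unnorm_def add.commute)

lemma ps_hom_polar:
  assumes m: "norm m = 1" and z: "z \<noteq> 0"
  shows "ps_hom k m z = norm z powr k * ps_unnorm k m (radial_proj z)"
proof -
  have "0 \<le> 1 + m \<bullet> radial_proj z"
    using abs_inner_le_norm_unit[OF m, of "radial_proj z"] by simp
  moreover have "norm z + m \<bullet> z = norm z * (1 + m \<bullet> radial_proj z)"
    using inner_radial_proj[OF z, of m] by (simp add: algebra_simps)
  ultimately show ?thesis
    using z by (simp add: ps_hom_def ps_unnorm_def powr_mult)
qed

lemma continuous_on_ps_hom:
  assumes "norm m = 1" "0 \<le> k"
  shows "continuous_on UNIV (ps_hom k m)"
proof (cases "k = 0")
  case False
  have "0 \<le> norm z + m \<bullet> z" for z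
    using abs_inner_le_norm_unit[OF assms(1), of z] by linarith
  then have "continuous_on UNIV (\<lambda>z. (norm z + m \<bullet> z) powr k)"
    using False assms(2) by (intro continuous_on_powr' continuous_intros) auto
  then show ?thesis
    using False by (simp add: ps_hom_def[abs_def])
qed (simp add: ps_hom_def)

lemma continuous_on_ps_unnorm_sphere:
  assumes "norm m = 1" "0 \<le> k"
  shows "continuous_on (sphere 0 1) (ps_unnorm k m)"
  using continuous_on_subset[OF continuous_on_ps_hom[OF assms]]
  by (rule continuous_on_cong[THEN iffD1, rotated -1]) (auto simp: ps_hom_unit)

lemma norm_add_inner_pos:
  assumes m: "norm m = 1" and z: "z \<notin> range (\<lambda>t. t *\<^sub>R m)"
  shows "0 < norm z + m \<bullet> z"
proof -
  have "\<bar>m \<bullet> z\<bar> \<noteq> norm m * norm z"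
  proof
    assume "\<bar>m \<bullet> z\<bar> = norm m * norm z"
    then have "z = norm z *\<^sub>R m \<or> z = (- norm z) *\<^sub>R m"
      using m by (subst (asm) norm_cauchy_schwarz_abs_eq) auto
    then show False
      using z by blast
  qed
  then show ?thesis
    using abs_inner_le_norm_unit[OF m, of z] m by simp
qed

lemma has_real_derivative_norm_line:
  fixes x v :: "'a::euclidean_space"
  assumes "x + s *\<^sub>R v \<noteq> 0"
  shows "((\<lambda>t. norm (x + t *\<^sub>R v)) has_real_derivative (x + s *\<^sub>R v) \<bullet> v / norm (x + s *\<^sub>R v)) (at s)"
proof -
  have "((\<lambda>t. x + t *\<^sub>R v) has_derivative (\<lambda>t. t *\<^sub>R v)) (at s)"
    by (auto intro!: derivative_eq_intros)
  from has_derivative_compose[OF this has_derivative_norm[OF assms]]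
  have "((\<lambda>t. norm (x + t *\<^sub>R v)) has_derivative (\<lambda>t. (t *\<^sub>R v) \<bullet> sgn (x + s *\<^sub>R v))) (at s)"
    by simp
  moreover have "(\<lambda>t. (t *\<^sub>R v) \<bullet> sgn (x + s *\<^sub>R v)) = (*) ((x + s *\<^sub>R v) \<bullet> v / norm (x + s *\<^sub>R v))"
    by (auto simp: sgn_div_norm inner_commute divide_inverse mult_ac)
  ultimately show ?thesis
    by (simp add: has_field_derivative_def)
qed

lemma has_real_derivative_ps_hom_line:
  fixes x v m :: "'a::euclidean_space" and s :: real
  defines "z \<equiv> x + s *\<^sub>R v"
  assumes m: "norm m = 1" and k: "0 \<le> k" and z: "z \<notin> range (\<lambda>t. t *\<^sub>R m)"
  shows "((\<lambda>t. ps_hom k m (x + t *\<^sub>R v)) has_real_derivative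
      ps_hom k m z * (k * (z \<bullet> v / norm z + m \<bullet> v) / (norm z + m \<bullet> z))) (at s)"
proof (cases "k = 0")
  case False
  have "z \<noteq> 0"
    using z by (metis rangeI scale_zero_left)
  have "((\<lambda>t. (norm (x + t *\<^sub>R v) + m \<bullet> (x + t *\<^sub>R v)) powr k) has_real_derivative
      (norm z + m \<bullet> z) powr k * (0 * ln (norm z + m \<bullet> z) + (z \<bullet> v / norm z + m \<bullet> v) * k / (norm z + m \<bullet> z))) (at s)"
    using norm_add_inner_pos[OF m z] \<open>z \<noteq> 0\<close> unfolding z_def
    by (intro DERIV_powr DERIV_add has_real_derivative_norm_line DERIV_const)
       (auto intro!: derivative_eq_intros simp: inner_add_right)
  then show ?thesis
    using False by (simp add: ps_hom_def[abs_def] mult_ac)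
qed (simp add: ps_hom_def)

lemma has_real_derivative_unit_ball_cutoff:
  fixes x v :: "'a::euclidean_space" and s :: real
  defines "z \<equiv> x + s *\<^sub>R v"
  assumes f: "(f has_real_derivative f') (at s)" and z: "norm z \<noteq> 1"
  shows "((\<lambda>t. f t * max 0 (1 - (norm (x + t *\<^sub>R v))\<^sup>2)) has_real_derivative
      (if norm z \<le> 1 then f' * (1 - (norm z)\<^sup>2) - f s * (2 * (z \<bullet> v)) else 0)) (at s)"
proof -
  have sq: "(norm (x + t *\<^sub>R v))\<^sup>2 = x \<bullet> x + 2 * t * (x \<bullet> v) + t\<^sup>2 * (v \<bullet> v)" for t
    unfolding power2_norm_eq_inner
    by (simp add: inner_add_left inner_add_right inner_commute[of v x] power2_eq_square algebra_simps)
  have "z \<bullet> v = x \<bullet> v + s * (v \<bullet> v)"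
    by (simp add: z_def inner_add_left)
  consider "norm z < 1" | "norm z > 1"
    using z by linarith
  then show ?thesis
  proof cases
    case 1
    have "((\<lambda>t. f t * (1 - (x \<bullet> x + 2 * t * (x \<bullet> v) + t\<^sup>2 * (v \<bullet> v)))) has_real_derivative
        f' * (1 - (norm z)\<^sup>2) - f s * (2 * (z \<bullet> v))) (at s)"
      using \<open>z \<bullet> v = _\<close> by (auto intro!: derivative_eq_intros f simp: sq[of s, folded z_def] algebra_simps)
    then have "((\<lambda>t. f t * max 0 (1 - (norm (x + t *\<^sub>R v))\<^sup>2)) has_real_derivative
        f' * (1 - (norm z)\<^sup>2) - f s * (2 * (z \<bullet> v))) (at s)"
    proof (rule has_field_derivative_transform_within_open)
      show "open {t. norm (x + t *\<^sub>R v) < 1}" "s \<in> {t. norm (x + t *\<^sub>R v) < 1}"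
        using 1 by (auto simp: z_def intro!: open_Collect_less continuous_intros)
    qed (auto simp: sq[symmetric] abs_square_le_1 max_def)
    then show ?thesis
      using 1 by simp
  next
    case 2
    have "((\<lambda>_. 0) has_real_derivative 0) (at s)"
      by simp
    then have "((\<lambda>t. f t * max 0 (1 - (norm (x + t *\<^sub>R v))\<^sup>2)) has_real_derivative 0) (at s)"
    proof (rule has_field_derivative_transform_within_open)
      show "open {t. 1 < norm (x + t *\<^sub>R v)}" "s \<in> {t. 1 < norm (x + t *\<^sub>R v)}"
        using 2 by (auto simp: z_def intro!: open_Collect_less continuous_intros)
    qed (auto simp: abs_square_le_1 max_def)
    then show ?thesis
      using 2 by simp
  qed
qed

lemma finite_line_inter_sphere:
  fixes x v :: "'a::euclidean_space"
  assumes "v \<noteq> 0"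
  shows "finite {s. norm (x + s *\<^sub>R v) = 1}"
proof -
  define c where "c i = [x \<bullet> x - 1, 2 * (x \<bullet> v), v \<bullet> v] ! i" for i
  have "norm (x + s *\<^sub>R v) = 1 \<longleftrightarrow> (norm (x + s *\<^sub>R v))\<^sup>2 = 1" for s
    by (simp add: power2_eq_1_iff) (smt (verit) norm_ge_zero)
  also have "(norm (x + s *\<^sub>R v))\<^sup>2 = 1 \<longleftrightarrow> (\<Sum>i\<le>2. c i * s ^ i) = 0" for s
    unfolding power2_norm_eq_inner
    by (simp add: c_def eval_nat_numeral inner_add_left inner_add_right inner_commute[of v x]
        power2_eq_square algebra_simps)
  finally have "{s. norm (x + s *\<^sub>R v) = 1} = {s. (\<Sum>i\<le>2. c i * s ^ i) = 0}"
    by blast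
  moreover have "c 2 \<noteq> 0"
    using assms by (simp add: c_def)
  ultimately show ?thesis
    using polyfun_rootbound_finite[of 2 c] by auto
qed

lemma finite_line_inter_ray:
  assumes "w \<noteq> 0" "w \<bullet> m = 0"
  shows "finite {s. x + s *\<^sub>R w \<in> range (\<lambda>t. t *\<^sub>R m)}"
proof -
  have unique: "s = s'" if "x + s *\<^sub>R w = t *\<^sub>R m" "x + s' *\<^sub>R w = t' *\<^sub>R m" for s s' t t'
  proof -
    have "(s - s') *\<^sub>R w = (x + s *\<^sub>R w) - (x + s' *\<^sub>R w)"
      by (simp add: algebra_simps)
    also have "\<dots> = (t - t') *\<^sub>R m"
      using that by (simp add: algebra_simps)
    finally have "(s - s') *\<^sub>R w = (t - t') *\<^sub>R m" .
    then have "((s - s') *\<^sub>R w) \<bullet> w = ((t - t') *\<^sub>R m) \<bullet> w"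
      by simp
    then have "(s - s') * (w \<bullet> w) = 0"
      using assms(2) by (simp add: inner_commute)
    then show ?thesis
      using assms(1) by simp
  qed
  show ?thesis
  proof (cases "{s. x + s *\<^sub>R w \<in> range (\<lambda>t. t *\<^sub>R m)} = {}")
    case False
    then obtain s0 where "x + s0 *\<^sub>R w \<in> range (\<lambda>t. t *\<^sub>R m)"
      by blast
    then have "{s. x + s *\<^sub>R w \<in> range (\<lambda>t. t *\<^sub>R m)} \<subseteq> {s0}"
      using unique by blast
    then show ?thesis
      by (rule finite_subset) simp
  qed simp
qed

lemma add_scaleR_notin_line:
  fixes x m :: "'a::real_vector"
  assumes "x \<notin> range (\<lambda>t. t *\<^sub>R m)"
  shows "x + s *\<^sub>R m \<notin> range (\<lambda>t. t *\<^sub>R m)"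
proof
  assume "x + s *\<^sub>R m \<in> range (\<lambda>t. t *\<^sub>R m)"
  then obtain r where "x + s *\<^sub>R m = r *\<^sub>R m"
    by blast
  then have "x = (r - s) *\<^sub>R m"
    by (simp add: scaleR_diff_left eq_diff_eq)
  with assms show False
    by blast
qed

lemma line_null_sets:
  assumes "DIM('a::euclidean_space) \<ge> 2"
  shows "range (\<lambda>t. t *\<^sub>R (m::'a)) \<in> null_sets lborel"
proof -
  have line: "range (\<lambda>t. t *\<^sub>R m) = span {m}"
    by (simp add: span_singleton image_def)
  have "dim (span {m}) \<le> 1"
    using dim_le_card'[of "{m}"] by simp
  then have "negligible (range (\<lambda>t. t *\<^sub>R m))"
    using assms by (intro negligible_lowdim) (simp add: line)
  moreover have "range (\<lambda>t. t *\<^sub>R m) \<in> sets borel"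
    by (simp add: line closed_span)
  ultimately show ?thesis
    by (auto simp: null_sets_completion_iff negligible_iff_null_sets)
qed

(* The integral of each derivative vanishes, which in polar coordinates is a linear relation
   between moments of ps_unnorm k m on the sphere. *)
definition Phi_axial :: "real \<Rightarrow> 'a::euclidean_space \<Rightarrow> real \<Rightarrow> 'a \<Rightarrow> 'a \<Rightarrow> real" where
  "Phi_axial k m c w z = ps_hom k m z * norm z * (c + w \<bullet> z) * max 0 (1 - (norm z)\<^sup>2)"

definition Phi_axial_deriv :: "real \<Rightarrow> 'a::euclidean_space \<Rightarrow> real \<Rightarrow> 'a \<Rightarrow> 'a \<Rightarrow> real" where
  "Phi_axial_deriv k m c w z = (if norm z \<le> 1 then
     ps_hom k m z * (c + w \<bullet> z) * ((k + m \<bullet> z / norm z) * (1 - (norm z)\<^sup>2) - 2 * norm z * (m \<bullet> z))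
   else 0)"

definition Phi_transverse :: "real \<Rightarrow> 'a::euclidean_space \<Rightarrow> 'a \<Rightarrow> real" where
  "Phi_transverse k m z = ps_hom k m z * (norm z + m \<bullet> z) * max 0 (1 - (norm z)\<^sup>2)"

definition Phi_transverse_deriv :: "real \<Rightarrow> 'a::euclidean_space \<Rightarrow> 'a \<Rightarrow> 'a \<Rightarrow> real" where
  "Phi_transverse_deriv k m w z = (if norm z \<le> 1 then
     ps_hom k m z * ((k + 1) * (w \<bullet> z / norm z) * (1 - (norm z)\<^sup>2) - 2 * (norm z + m \<bullet> z) * (w \<bullet> z))
   else 0)"

lemma Phi_axial_deriv_measurable [measurable]: "Phi_axial_deriv k m c w \<in> borel_measurable borel"
  unfolding Phi_axial_deriv_def by measurable

lemma Phi_transverse_deriv_measurable [measurable]: "Phi_transverse_deriv k m w \<in> borel_measurable borel"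
  unfolding Phi_transverse_deriv_def by measurable

lemma has_real_derivative_ps_hom_norm_axial:
  fixes x m :: "'a::euclidean_space" and s :: real
  defines "z \<equiv> x + s *\<^sub>R m"
  assumes m: "norm m = 1" and k: "0 \<le> k" and z: "z \<notin> range (\<lambda>t. t *\<^sub>R m)"
  shows "((\<lambda>t. ps_hom k m (x + t *\<^sub>R m) * norm (x + t *\<^sub>R m)) has_real_derivative
      ps_hom k m z * (k + m \<bullet> z / norm z)) (at s)"
proof -
  have G: "0 < norm z + m \<bullet> z" and "z \<noteq> 0"
    using norm_add_inner_pos[OF m z] z by (metis rangeI scale_zero_left)+
  have "z \<bullet> m / norm z + m \<bullet> m = (norm z + m \<bullet> z) / norm z"
    using \<open>z \<noteq> 0\<close> m by (simp add: norm_eq_1 inner_commute field_simps)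
  then have "ps_hom k m z * (k * (z \<bullet> m / norm z + m \<bullet> m) / (norm z + m \<bullet> z)) * norm z = ps_hom k m z * k"
    using G \<open>z \<noteq> 0\<close> by simp
  then have "ps_hom k m z * (k * (z \<bullet> m / norm z + m \<bullet> m) / (norm z + m \<bullet> z)) * norm z
      + z \<bullet> m / norm z * ps_hom k m z = ps_hom k m z * (k + m \<bullet> z / norm z)"
    by (simp add: inner_commute algebra_simps)
  then show ?thesis
    using DERIV_mult[OF has_real_derivative_ps_hom_line[OF m k z[unfolded z_def]]
        has_real_derivative_norm_line[OF \<open>z \<noteq> 0\<close>[unfolded z_def]]]
    by (simp add: z_def)
qed

lemma has_real_derivative_Phi_axial:
  fixes x m w :: "'a::euclidean_space" and s :: real
  defines "z \<equiv> x + s *\<^sub>R m"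
  assumes m: "norm m = 1" and wm: "w \<bullet> m = 0" and k: "0 \<le> k"
    and z: "z \<notin> range (\<lambda>t. t *\<^sub>R m)" and z1: "norm z \<noteq> 1"
  shows "((\<lambda>t. Phi_axial k m c w (x + t *\<^sub>R m)) has_real_derivative Phi_axial_deriv k m c w z) (at s)"
proof -
  have L: "w \<bullet> (x + t *\<^sub>R m) = w \<bullet> x" for t
    using wm by (simp add: inner_add_right)
  have "((\<lambda>t. ps_hom k m (x + t *\<^sub>R m) * norm (x + t *\<^sub>R m) * (c + w \<bullet> x)
      * max 0 (1 - (norm (x + t *\<^sub>R m))\<^sup>2)) has_real_derivative
      (if norm z \<le> 1 then ps_hom k m z * (k + m \<bullet> z / norm z) * (c + w \<bullet> x) * (1 - (norm z)\<^sup>2)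
         - ps_hom k m z * norm z * (c + w \<bullet> x) * (2 * (z \<bullet> m)) else 0)) (at s)"
    using z1 unfolding z_def
    by (intro has_real_derivative_unit_ball_cutoff DERIV_cmult_right
        has_real_derivative_ps_hom_norm_axial[OF m k z[unfolded z_def]])
  moreover have "(\<lambda>t. Phi_axial k m c w (x + t *\<^sub>R m)) = (\<lambda>t. ps_hom k m (x + t *\<^sub>R m)
      * norm (x + t *\<^sub>R m) * (c + w \<bullet> x) * max 0 (1 - (norm (x + t *\<^sub>R m))\<^sup>2))"
    by (simp add: Phi_axial_def L)
  moreover have "Phi_axial_deriv k m c w z = (if norm z \<le> 1 then ps_hom k m z * (k + m \<bullet> z / norm z) * (c + w \<bullet> x)
      * (1 - (norm z)\<^sup>2) - ps_hom k m z * norm z * (c + w \<bullet> x) * (2 * (z \<bullet> m)) else 0)"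
    using L[of s] by (simp add: Phi_axial_deriv_def z_def[symmetric] inner_commute algebra_simps diff_divide_distrib add_divide_distrib)
  ultimately show ?thesis
    by simp
qed

lemma has_real_derivative_Phi_transverse:
  fixes x m w :: "'a::euclidean_space" and s :: real
  defines "z \<equiv> x + s *\<^sub>R w"
  assumes m: "norm m = 1" and wm: "w \<bullet> m = 0" and k: "0 \<le> k"
    and z: "z \<notin> range (\<lambda>t. t *\<^sub>R m)" and z1: "norm z \<noteq> 1"
  shows "((\<lambda>t. Phi_transverse k m (x + t *\<^sub>R w)) has_real_derivative Phi_transverse_deriv k m w z) (at s)"
proof -
  have G: "0 < norm z + m \<bullet> z" and "z \<noteq> 0"
    using norm_add_inner_pos[OF m z] z by (metis rangeI scale_zero_left)+
  have dP: "((\<lambda>t. ps_hom k m (x + t *\<^sub>R w)) has_real_derivative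
      ps_hom k m z * (k * (z \<bullet> w / norm z) / (norm z + m \<bullet> z))) (at s)"
    using has_real_derivative_ps_hom_line[OF m k z[unfolded z_def]] wm by (simp add: z_def inner_commute)
  have dG: "((\<lambda>t. norm (x + t *\<^sub>R w) + m \<bullet> (x + t *\<^sub>R w)) has_real_derivative z \<bullet> w / norm z) (at s)"
    using DERIV_add[OF has_real_derivative_norm_line[OF \<open>z \<noteq> 0\<close>[unfolded z_def]], of "\<lambda>t. m \<bullet> (x + t *\<^sub>R w)" 0] wm
    by (auto simp: z_def inner_add_right inner_commute intro!: derivative_eq_intros)
  have "((\<lambda>t. ps_hom k m (x + t *\<^sub>R w) * (norm (x + t *\<^sub>R w) + m \<bullet> (x + t *\<^sub>R w))) has_real_derivative
      ps_hom k m z * (k * (z \<bullet> w / norm z) / (norm z + m \<bullet> z)) * (norm z + m \<bullet> z)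
        + z \<bullet> w / norm z * ps_hom k m z) (at s)"
    using DERIV_mult[OF dP dG] by (simp add: z_def)
  also have "ps_hom k m z * (k * (z \<bullet> w / norm z) / (norm z + m \<bullet> z)) * (norm z + m \<bullet> z)
        + z \<bullet> w / norm z * ps_hom k m z = ps_hom k m z * ((k + 1) * (w \<bullet> z / norm z))"
  proof -
    have "ps_hom k m z * (k * (z \<bullet> w / norm z) / (norm z + m \<bullet> z)) * (norm z + m \<bullet> z)
        = ps_hom k m z * k * (z \<bullet> w / norm z)"
      using G by simp
    then show ?thesis
      by (simp only:) (simp add: inner_commute algebra_simps add_divide_distrib)
  qed
  finally have "((\<lambda>t. ps_hom k m (x + t *\<^sub>R w) * (norm (x + t *\<^sub>R w) + m \<bullet> (x + t *\<^sub>R w))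
      * max 0 (1 - (norm (x + t *\<^sub>R w))\<^sup>2)) has_real_derivative
      (if norm z \<le> 1 then ps_hom k m z * ((k + 1) * (w \<bullet> z / norm z)) * (1 - (norm z)\<^sup>2)
         - ps_hom k m z * (norm z + m \<bullet> z) * (2 * (z \<bullet> w)) else 0)) (at s)"
    using z1 unfolding z_def by (rule has_real_derivative_unit_ball_cutoff)
  moreover have "Phi_transverse_deriv k m w z = (if norm z \<le> 1 then
      ps_hom k m z * ((k + 1) * (w \<bullet> z / norm z)) * (1 - (norm z)\<^sup>2)
        - ps_hom k m z * (norm z + m \<bullet> z) * (2 * (z \<bullet> w)) else 0)"
    by (simp add: Phi_transverse_deriv_def inner_commute algebra_simps)
  ultimately show ?thesis
    by (simp add: Phi_transverse_def[abs_def])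
qed

lemma unit_ball_inner_bounds:
  fixes m w z :: "'a::euclidean_space"
  assumes m: "norm m = 1" and z: "norm z \<le> 1"
  shows "\<bar>m \<bullet> z\<bar> \<le> 1" "\<bar>m \<bullet> z / norm z\<bar> \<le> 1" "\<bar>w \<bullet> z\<bar> \<le> norm w" "\<bar>w \<bullet> z / norm z\<bar> \<le> norm w"
    "0 \<le> 1 - (norm z)\<^sup>2" "1 - (norm z)\<^sup>2 \<le> 1"
proof -
  have cm: "\<bar>m \<bullet> z\<bar> \<le> norm z" and cw: "\<bar>w \<bullet> z\<bar> \<le> norm w * norm z"
    using abs_inner_le_norm_unit[OF m] Cauchy_Schwarz_ineq2[of w z] by auto
  show "\<bar>m \<bullet> z\<bar> \<le> 1"
    using cm z by linarith
  show "\<bar>m \<bullet> z / norm z\<bar> \<le> 1" "\<bar>w \<bullet> z / norm z\<bar> \<le> norm w"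
    using cm cw by (auto simp: abs_div divide_le_eq)
  show "\<bar>w \<bullet> z\<bar> \<le> norm w"
    using cw z by (meson mult_left_le norm_ge_zero order.trans)
  show "0 \<le> 1 - (norm z)\<^sup>2" "1 - (norm z)\<^sup>2 \<le> 1"
    using z by (simp_all add: power_le_one)
qed

lemma abs_Phi_axial_deriv_le:
  fixes m w z :: "'a::euclidean_space"
  assumes m: "norm m = 1" and k: "0 \<le> k"
  shows "\<bar>Phi_axial_deriv k m c w z\<bar> \<le> 2 powr k * (\<bar>c\<bar> + norm w) * (k + 3)"
proof (cases "norm z \<le> 1")
  case True
  note b = unit_ball_inner_bounds[OF m True]
  have "\<bar>k + m \<bullet> z / norm z\<bar> \<le> k + 1"
    using b(2) k by linarith
  then have "\<bar>(k + m \<bullet> z / norm z) * (1 - (norm z)\<^sup>2)\<bar> \<le> (k + 1) * 1"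
    using b(5,6) unfolding abs_mult by (intro mult_mono) auto
  moreover have "\<bar>2 * norm z * (m \<bullet> z)\<bar> \<le> 2 * 1 * 1"
    using b(1) True unfolding abs_mult by (intro mult_mono) auto
  ultimately have "\<bar>(k + m \<bullet> z / norm z) * (1 - (norm z)\<^sup>2) - 2 * norm z * (m \<bullet> z)\<bar> \<le> k + 3"
    using order.trans[OF abs_triangle_ineq4 add_mono] by fastforce
  moreover have "\<bar>c + w \<bullet> z\<bar> \<le> \<bar>c\<bar> + norm w"
    using b(3)[of w] abs_triangle_ineq[of c "w \<bullet> z"] by linarith
  ultimately show ?thesis
    using True ps_hom_nonneg[of k m z] ps_hom_le[OF m True k]
    by (simp add: Phi_axial_deriv_def abs_mult mult_mono)
qed (use k in \<open>simp add: Phi_axial_deriv_def\<close>)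

lemma abs_Phi_transverse_deriv_le:
  fixes m w z :: "'a::euclidean_space"
  assumes m: "norm m = 1" and k: "0 \<le> k"
  shows "\<bar>Phi_transverse_deriv k m w z\<bar> \<le> 2 powr k * ((k + 5) * norm w)"
proof (cases "norm z \<le> 1")
  case True
  note b = unit_ball_inner_bounds[OF m True]
  have "\<bar>(k + 1) * (w \<bullet> z / norm z) * (1 - (norm z)\<^sup>2)\<bar> \<le> (k + 1) * norm w * 1"
    using b(4-6) k unfolding abs_mult by (intro mult_mono) auto
  moreover have "\<bar>2 * (norm z + m \<bullet> z) * (w \<bullet> z)\<bar> \<le> 2 * 2 * norm w"
  proof -
    have "\<bar>norm z + m \<bullet> z\<bar> \<le> 2"
      using b(1) True norm_ge_zero[of z] unfolding abs_le_iff by (intro conjI; linarith)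
    then show ?thesis
      using b(3) unfolding abs_mult by (intro mult_mono) auto
  qed
  ultimately have "\<bar>(k + 1) * (w \<bullet> z / norm z) * (1 - (norm z)\<^sup>2) - 2 * (norm z + m \<bullet> z) * (w \<bullet> z)\<bar>
      \<le> (k + 1) * norm w * 1 + 2 * 2 * norm w"
    by (rule order.trans[OF abs_triangle_ineq4 add_mono])
  then have "\<bar>(k + 1) * (w \<bullet> z / norm z) * (1 - (norm z)\<^sup>2) - 2 * (norm z + m \<bullet> z) * (w \<bullet> z)\<bar>
      \<le> (k + 5) * norm w"
    by (simp add: algebra_simps)
  then show ?thesis
    using True ps_hom_nonneg[of k m z] ps_hom_le[OF m True k]
    by (simp add: Phi_transverse_deriv_def abs_mult mult_mono)
qed (use k in \<open>simp add: Phi_transverse_deriv_def\<close>)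

lemma unit_ball_cutoff_eq_0: "norm z > 1 \<Longrightarrow> max 0 (1 - (norm z)\<^sup>2) = 0"
  by (simp add: max_def abs_square_le_1)

lemma integral_Phi_axial_deriv_eq_0:
  fixes m w :: "'a::euclidean_space"
  assumes d: "DIM('a) \<ge> 2" and m: "norm m = 1" and wm: "w \<bullet> m = 0" and k: "0 \<le> k"
  shows "(\<integral>z. Phi_axial_deriv k m c w z \<partial>lborel) = 0"
proof (rule integral_directional_derivative_eq_0[where v=m])
  show "continuous_on UNIV (Phi_axial k m c w)"
    unfolding Phi_axial_def by (intro continuous_intros continuous_on_ps_hom[OF m k])
  show "\<bar>Phi_axial_deriv k m c w z\<bar> \<le> 2 powr k * (\<bar>c\<bar> + norm w) * (k + 3)" for z
    by (rule abs_Phi_axial_deriv_le[OF m k])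
  show "Phi_axial k m c w z = 0" "Phi_axial_deriv k m c w z = 0" if "norm z > 1" for z
    using that by (simp_all add: Phi_axial_def Phi_axial_deriv_def unit_ball_cutoff_eq_0)
  have "AE x in lborel. x \<notin> range (\<lambda>t. t *\<^sub>R m)"
    by (rule AE_not_in[OF line_null_sets[OF d]])
  then show "AE x in lborel. \<exists>S. finite S \<and> (\<forall>s\<in>{0<..<1} - S.
      ((\<lambda>s. Phi_axial k m c w (x + s *\<^sub>R m)) has_real_derivative Phi_axial_deriv k m c w (x + s *\<^sub>R m)) (at s))"
  proof eventually_elim
    case (elim x)
    have "m \<noteq> 0"
      using m by auto
    then show ?case
      using finite_line_inter_sphere has_real_derivative_Phi_axial[OF m wm k add_scaleR_notin_line[OF elim]]
      by blast
  qed
qed (simp add: Phi_axial_deriv_def)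

lemma integral_Phi_transverse_deriv_eq_0:
  fixes m w :: "'a::euclidean_space"
  assumes m: "norm m = 1" and wm: "w \<bullet> m = 0" and w: "w \<noteq> 0" and k: "0 \<le> k"
  shows "(\<integral>z. Phi_transverse_deriv k m w z \<partial>lborel) = 0"
proof (rule integral_directional_derivative_eq_0[where v=w])
  show "continuous_on UNIV (Phi_transverse k m)"
    unfolding Phi_transverse_def by (intro continuous_intros continuous_on_ps_hom[OF m k])
  show "\<bar>Phi_transverse_deriv k m w z\<bar> \<le> 2 powr k * ((k + 5) * norm w)" for z
    by (rule abs_Phi_transverse_deriv_le[OF m k])
  show "Phi_transverse k m z = 0" "Phi_transverse_deriv k m w z = 0" if "norm z > 1" for z
    using that by (simp_all add: Phi_transverse_def Phi_transverse_deriv_def unit_ball_cutoff_eq_0)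
  show "AE x in lborel. \<exists>S. finite S \<and> (\<forall>s\<in>{0<..<1} - S.
      ((\<lambda>s. Phi_transverse k m (x + s *\<^sub>R w)) has_real_derivative Phi_transverse_deriv k m w (x + s *\<^sub>R w)) (at s))"
  proof (rule AE_I2, rule exI, intro conjI ballI)
    fix x :: 'a
    show "finite ({s. norm (x + s *\<^sub>R w) = 1} \<union> {s. x + s *\<^sub>R w \<in> range (\<lambda>t. t *\<^sub>R m)})"
      using finite_line_inter_sphere[OF w] finite_line_inter_ray[OF w wm] by blast
  qed (auto intro!: has_real_derivative_Phi_transverse[OF m wm k])
qed (simp add: Phi_transverse_deriv_def)

section \<open>Moments of the Power Spherical density\<close>

lemma Phi_axial_deriv_polar:
  fixes m z :: "'a::euclidean_space"
  assumes m: "norm m = 1" and z: "z \<in> punctured_ball"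
  defines "u \<equiv> radial_proj z"
  shows "Phi_axial_deriv k m c w z = norm z powr k * (1 - (norm z)\<^sup>2) * ((k + m \<bullet> u) * ps_unnorm k m u * (c + w \<bullet> z))
      - 2 * norm z powr (k + 2) * (m \<bullet> u * ps_unnorm k m u * (c + w \<bullet> z))"
proof -
  have "z \<noteq> 0" "norm z \<le> 1"
    using z by (auto simp: punctured_ball_def)
  then show ?thesis
    using inner_radial_proj[OF \<open>z \<noteq> 0\<close>, of m]
    by (simp add: Phi_axial_deriv_def ps_hom_polar[OF m] u_def powr_add power2_eq_square algebra_simps)
qed

lemma Phi_transverse_deriv_polar:
  fixes m z :: "'a::euclidean_space"
  assumes m: "norm m = 1" and z: "z \<in> punctured_ball"
  defines "u \<equiv> radial_proj z"
  shows "Phi_transverse_deriv k m w z = norm z powr k * (1 - (norm z)\<^sup>2) * ((k + 1) * ps_unnorm k m u * (w \<bullet> u))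
      - 2 * norm z powr (k + 2) * ((1 + m \<bullet> u) * ps_unnorm k m u * (w \<bullet> u))"
proof -
  have "z \<noteq> 0" "norm z \<le> 1"
    using z by (auto simp: punctured_ball_def)
  then show ?thesis
    using inner_radial_proj[OF \<open>z \<noteq> 0\<close>, of m] inner_radial_proj[OF \<open>z \<noteq> 0\<close>, of w]
    by (simp add: Phi_transverse_deriv_def ps_hom_polar[OF m] u_def powr_add power2_eq_square algebra_simps)
qed

lemma ps_moment_axial:
  fixes m :: "'a::euclidean_space"
  assumes d: "DIM('a) \<ge> 2" and m: "norm m = 1" and k: "0 \<le> k"
  shows "k * (\<integral>x. ps_unnorm k m x \<partial>sphere_surface)
    = (k + DIM('a) - 1) * (\<integral>x. ps_unnorm k m x * (m \<bullet> x) \<partial>sphere_surface)"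
proof -
  have cont: "continuous_on (sphere 0 1) (ps_unnorm k m)"
    by (rule continuous_on_ps_unnorm_sphere[OF m k])
  have "(\<integral>x. (k + m \<bullet> x) * ps_unnorm k m x * 1 \<partial>sphere_surface)
      = (k + DIM('a)) * (\<integral>x. m \<bullet> x * ps_unnorm k m x * 1 \<partial>sphere_surface)"
  proof (rule integral_sphere_eq_of_flux_eq_0[where \<phi>="Phi_axial_deriv k m 1 0"])
    show "Phi_axial_deriv k m 1 0 z = 0" if "norm z > 1" for z
      using that by (simp add: Phi_axial_deriv_def)
    show "Phi_axial_deriv k m 1 0 z = norm z powr k * (1 - (norm z)\<^sup>2) * ((k + m \<bullet> radial_proj z) * ps_unnorm k m (radial_proj z) * 1)
        - 2 * norm z powr (k + 2) * (m \<bullet> radial_proj z * ps_unnorm k m (radial_proj z) * 1)" if "z \<in> punctured_ball" for z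
      using Phi_axial_deriv_polar[OF m that] by simp
    show "(\<integral>z. Phi_axial_deriv k m 1 0 z \<partial>lborel) = 0"
      by (rule integral_Phi_axial_deriv_eq_0[OF d m _ k]) simp
  qed (auto intro!: continuous_intros cont simp: k)
  moreover have "integrable sphere_surface (ps_unnorm k m)" "integrable sphere_surface (\<lambda>x. m \<bullet> x * ps_unnorm k m x)"
    by (auto intro!: integrable_sphere_surface_continuous continuous_intros cont)
  ultimately show ?thesis
    by (simp add: distrib_right mult.commute[of _ "ps_unnorm k m _"]) (simp add: algebra_simps)
qed

lemma ps_mixed_moment_axial:
  fixes m w :: "'a::euclidean_space"
  assumes d: "DIM('a) \<ge> 2" and m: "norm m = 1" and wm: "w \<bullet> m = 0" and k: "0 \<le> k"
  shows "k * (\<integral>x. ps_unnorm k m x * (w \<bullet> x) \<partial>sphere_surface)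
    = (k + DIM('a)) * (\<integral>x. m \<bullet> x * ps_unnorm k m x * (w \<bullet> x) \<partial>sphere_surface)"
proof -
  have cont: "continuous_on (sphere 0 1) (ps_unnorm k m)"
    by (rule continuous_on_ps_unnorm_sphere[OF m k])
  have "(\<integral>x. (k + m \<bullet> x) * ps_unnorm k m x * (w \<bullet> x) \<partial>sphere_surface)
      = (k + 1 + DIM('a)) * (\<integral>x. m \<bullet> x * ps_unnorm k m x * (w \<bullet> x) \<partial>sphere_surface)"
  proof (rule integral_sphere_eq_of_flux_eq_0[where \<phi>="Phi_axial_deriv k m 0 w"])
    show "Phi_axial_deriv k m 0 w z = 0" if "norm z > 1" for z
      using that by (simp add: Phi_axial_deriv_def)
    show "Phi_axial_deriv k m 0 w z = norm z powr (k + 1) * (1 - (norm z)\<^sup>2)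
          * ((k + m \<bullet> radial_proj z) * ps_unnorm k m (radial_proj z) * (w \<bullet> radial_proj z))
        - 2 * norm z powr (k + 1 + 2) * (m \<bullet> radial_proj z * ps_unnorm k m (radial_proj z) * (w \<bullet> radial_proj z))"
      if "z \<in> punctured_ball" for z
    proof -
      have "z \<noteq> 0"
        using that by (auto simp: punctured_ball_def)
      then have "norm z powr (k + 1) = norm z powr k * norm z"
          "norm z powr (k + 1 + 2) = norm z powr (k + 2) * norm z"
        using powr_add[of "norm z" k 1] powr_add[of "norm z" "k + 2" 1] by (simp_all add: add_ac)
      then show ?thesis
        using Phi_axial_deriv_polar[OF m that, of k 0 w] inner_radial_proj[OF \<open>z \<noteq> 0\<close>, of w]
        by (simp add: algebra_simps)
    qed
    show "(\<integral>z. Phi_axial_deriv k m 0 w z \<partial>lborel) = 0"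
      by (rule integral_Phi_axial_deriv_eq_0[OF d m wm k])
  qed (auto intro!: continuous_intros cont simp: k)
  moreover have "integrable sphere_surface (\<lambda>x. ps_unnorm k m x * (w \<bullet> x))"
    "integrable sphere_surface (\<lambda>x. m \<bullet> x * ps_unnorm k m x * (w \<bullet> x))"
    by (auto intro!: integrable_sphere_surface_continuous continuous_intros cont)
  ultimately show ?thesis
    by (simp add: distrib_right mult.commute[of _ "ps_unnorm k m _"]) (simp add: algebra_simps)
qed

lemma ps_mixed_moment_transverse:
  fixes m w :: "'a::euclidean_space"
  assumes m: "norm m = 1" and wm: "w \<bullet> m = 0" and w: "w \<noteq> 0" and k: "0 \<le> k"
  shows "(k + 1) * (\<integral>x. ps_unnorm k m x * (w \<bullet> x) \<partial>sphere_surface)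
    = (k + DIM('a)) * ((\<integral>x. ps_unnorm k m x * (w \<bullet> x) \<partial>sphere_surface)
        + (\<integral>x. m \<bullet> x * ps_unnorm k m x * (w \<bullet> x) \<partial>sphere_surface))"
proof -
  have cont: "continuous_on (sphere 0 1) (ps_unnorm k m)"
    by (rule continuous_on_ps_unnorm_sphere[OF m k])
  have "(\<integral>x. (k + 1) * ps_unnorm k m x * (w \<bullet> x) \<partial>sphere_surface)
      = (k + DIM('a)) * (\<integral>x. (1 + m \<bullet> x) * ps_unnorm k m x * (w \<bullet> x) \<partial>sphere_surface)"
  proof (rule integral_sphere_eq_of_flux_eq_0[where \<phi>="Phi_transverse_deriv k m w"])
    show "Phi_transverse_deriv k m w z = 0" if "norm z > 1" for z
      using that by (simp add: Phi_transverse_deriv_def)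
    show "(\<integral>z. Phi_transverse_deriv k m w z \<partial>lborel) = 0"
      by (rule integral_Phi_transverse_deriv_eq_0[OF m wm w k])
  qed (auto intro!: continuous_intros cont simp: k Phi_transverse_deriv_polar[OF m])
  moreover have "integrable sphere_surface (\<lambda>x. ps_unnorm k m x * (w \<bullet> x))"
    "integrable sphere_surface (\<lambda>x. m \<bullet> x * ps_unnorm k m x * (w \<bullet> x))"
    by (auto intro!: integrable_sphere_surface_continuous continuous_intros cont)
  ultimately show ?thesis
    by (simp add: distrib_right mult.commute[of _ "ps_unnorm k m _"]) (simp add: algebra_simps)
qed

lemma ps_moment_orthogonal:
  fixes m w :: "'a::euclidean_space"
  assumes d: "DIM('a) \<ge> 2" and m: "norm m = 1" and wm: "w \<bullet> m = 0" and k: "0 \<le> k"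
  shows "(\<integral>x. ps_unnorm k m x * (w \<bullet> x) \<partial>sphere_surface) = 0"
proof (cases "w = 0")
  case False
  let ?T0 = "\<integral>x. ps_unnorm k m x * (w \<bullet> x) \<partial>sphere_surface"
  have "(k + DIM('a) - 1) * ?T0 = 0"
    using ps_mixed_moment_axial[OF d m wm k] ps_mixed_moment_transverse[OF m wm False k]
    by (simp add: algebra_simps)
  moreover have "k + DIM('a) - 1 \<noteq> 0"
    using d k by simp
  ultimately show ?thesis
    by simp
qed simp

lemma ps_first_moment:
  fixes m v :: "'a::euclidean_space"
  assumes d: "DIM('a) \<ge> 2" and m: "norm m = 1" and k: "0 \<le> k"
  shows "(\<integral>x. ps_unnorm k m x * (v \<bullet> x) \<partial>sphere_surface)
    = (v \<bullet> m) * (k / (k + DIM('a) - 1)) * (\<integral>x. ps_unnorm k m x \<partial>sphere_surface)"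
proof -
  define w where "w = v - (v \<bullet> m) *\<^sub>R m"
  have wm: "w \<bullet> m = 0"
    using m by (simp add: w_def inner_diff_left norm_eq_1)
  have cont: "continuous_on (sphere 0 1) (ps_unnorm k m)"
    by (rule continuous_on_ps_unnorm_sphere[OF m k])
  have "(\<integral>x. ps_unnorm k m x * (v \<bullet> x) \<partial>sphere_surface)
      = (\<integral>x. (v \<bullet> m) * (ps_unnorm k m x * (m \<bullet> x)) + ps_unnorm k m x * (w \<bullet> x) \<partial>sphere_surface)"
    by (simp add: w_def inner_diff_left algebra_simps)
  also have "\<dots> = (v \<bullet> m) * (\<integral>x. ps_unnorm k m x * (m \<bullet> x) \<partial>sphere_surface)"
    using ps_moment_orthogonal[OF d m wm k]
    by (subst Bochner_Integration.integral_add)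
       (auto intro!: integrable_sphere_surface_continuous continuous_intros cont)
  also have "(\<integral>x. ps_unnorm k m x * (m \<bullet> x) \<partial>sphere_surface)
      = k / (k + DIM('a) - 1) * (\<integral>x. ps_unnorm k m x \<partial>sphere_surface)"
  proof -
    have "k + DIM('a) - 1 > 0"
      using d k by simp
    then show ?thesis
      using ps_moment_axial[OF d m k] by (simp add: field_simps)
  qed
  finally show ?thesis
    by simp
qed

section \<open>The divergence\<close>

lemma ps_normalizer_pos:
  assumes m: "norm m = 1" and k: "0 \<le> k"
  shows "(\<integral>x. ps_unnorm k m x \<partial>sphere_surface) > 0"
proof (rule integral_sphere_surface_pos[OF m _ continuous_on_ps_unnorm_sphere[OF m k], where c=1])
  show "0 \<le> ps_unnorm k m x" for x
    by (simp add: ps_unnorm_def)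
  show "1 \<le> ps_unnorm k m x" if "m \<bullet> x > 0" for x
    using that k by (auto simp: ps_unnorm_def intro: ge_one_powr_ge_zero)
qed auto

lemma vmf_norm_pos:
  assumes m: "norm m = 1" and k: "0 \<le> k"
  shows "vmf_norm k m > 0"
  unfolding vmf_norm_def
  by (rule integral_sphere_surface_pos[OF m _ _ _ _ zero_less_one]) (use k in \<open>auto intro!: continuous_intros\<close>)

lemma integral_ps_density_ln_vmf_density:
  fixes \<mu>p \<mu>q :: "'a::euclidean_space"
  assumes d: "DIM('a) \<ge> 2" and mp: "norm \<mu>p = 1" and mq: "norm \<mu>q = 1" and kp: "0 \<le> \<kappa>p" and kq: "0 \<le> \<kappa>q"
  shows "(\<integral>x. ps_density \<kappa>p \<mu>p x * ln (vmf_density \<kappa>q \<mu>q x) \<partial>sphere_surface)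
    = \<kappa>q * (\<mu>q \<bullet> \<mu>p) * (\<kappa>p / (\<kappa>p + DIM('a) - 1)) - ln (vmf_norm \<kappa>q \<mu>q)"
proof -
  define Z where "Z = (\<integral>x. ps_unnorm \<kappa>p \<mu>p x \<partial>(sphere_surface :: 'a measure))"
  have Z: "Z > 0"
    unfolding Z_def by (rule ps_normalizer_pos[OF mp kp])
  have ln_vmf: "ln (vmf_density \<kappa>q \<mu>q x) = \<kappa>q * (\<mu>q \<bullet> x) - ln (vmf_norm \<kappa>q \<mu>q)" for x
    using vmf_norm_pos[OF mq kq] by (simp add: vmf_density_def ln_div)
  have cont: "continuous_on (sphere 0 1) (ps_unnorm \<kappa>p \<mu>p)"
    by (rule continuous_on_ps_unnorm_sphere[OF mp kp])
  have "(\<integral>x. ps_density \<kappa>p \<mu>p x * ln (vmf_density \<kappa>q \<mu>q x) \<partial>sphere_surface)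
      = (\<integral>x. \<kappa>q / Z * (ps_unnorm \<kappa>p \<mu>p x * (\<mu>q \<bullet> x)) - ln (vmf_norm \<kappa>q \<mu>q) / Z * ps_unnorm \<kappa>p \<mu>p x
          \<partial>sphere_surface)"
    by (simp add: ps_density_def Z_def[symmetric] ln_vmf algebra_simps)
  also have "\<dots> = \<kappa>q / Z * (\<integral>x. ps_unnorm \<kappa>p \<mu>p x * (\<mu>q \<bullet> x) \<partial>sphere_surface) - ln (vmf_norm \<kappa>q \<mu>q)"
    using Z by (subst Bochner_Integration.integral_diff)
      (auto simp: Z_def[symmetric] intro!: integrable_sphere_surface_continuous continuous_intros cont)
  also have "\<dots> = \<kappa>q * (\<mu>q \<bullet> \<mu>p) * (\<kappa>p / (\<kappa>p + DIM('a) - 1)) - ln (vmf_norm \<kappa>q \<mu>q)"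
    using Z by (simp add: ps_first_moment[OF d mp kp] Z_def[symmetric])
  finally show ?thesis .
qed

theorem theorem16:
  fixes \<mu>p \<mu>q :: "'a::euclidean_space" and \<kappa>p \<kappa>q :: real
  assumes "DIM('a) \<ge> 2"
    and "norm \<mu>p = 1" and "norm \<mu>q = 1"
    and "\<kappa>p \<ge> 0" and "\<kappa>q \<ge> 0"
  shows "let d = real DIM('a); \<alpha> = (d - 1) / 2 + \<kappa>p; \<beta> = (d - 1) / 2 in
    sph_KL (ps_density \<kappa>p \<mu>p) (vmf_density \<kappa>q \<mu>q)
      = - sph_entropy (ps_density \<kappa>p \<mu>p) + ln (vmf_norm \<kappa>q \<mu>q)
        - \<kappa>q * (\<mu>q \<bullet> \<mu>p) * ((\<alpha> - \<beta>) / (\<alpha> + \<beta>))"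
proof -
  have "(real DIM('a) - 1) / 2 + \<kappa>p - (real DIM('a) - 1) / 2 = \<kappa>p"
    "(real DIM('a) - 1) / 2 + \<kappa>p + (real DIM('a) - 1) / 2 = \<kappa>p + DIM('a) - 1"
    by (simp_all add: field_simps)
  then show ?thesis
    unfolding Let_def sph_KL_def integral_ps_density_ln_vmf_density[OF assms] by simp
qed

end
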